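(* Let $H\in(\frac12,1)$ and $\theta>0$. Let $B=(B_t)_{t\ge0}$ be a fractional Brownian motion with Hurst index $H$, and let $X$ be the solution of $X_0=0$, $dX_t=\theta X_t\,dt+dB_t$, $t\ge0$, i.e. $X_t=e^{\theta t}\int_0^t e^{-\theta s}dB_s$. Define the least squares estimator $$\widehat{\theta}_t=\frac{\int_0^t X_s\,dX_s}{\int_0^t X_s^2\,ds},\qquad t>0,$$ where $\int_0^t X_s\,dX_s$ is a Young (pathwise Riemann–Stieltjes) integral. Then $\widehat{\theta}_t\to\theta$ almost surely as $t\to\infty$.
   Context: A fractional Brownian motion with Hurst index $H\in(0,1)$ is a centered Gaussian process $(B_t)_{t\ge0}$ with $B_0=0$ and covariance $E(B_tB_s)=\frac12(t^{2H}+s^{2H}-|t-s|^{2H})$; it has a modification with $(H-\varepsilon)$-Hölder continuous paths for every $\varepsilon\in(0,H)$. For $H>\frac12$, integrals $\int f\,dg$ of Hölder functions of orders $\alpha,\beta$ with $\alpha+\beta>1$ are understood in the Young (Riemann–Stieltjes) sense; in particular $\int_0^tX_s\,dX_s=X_t^2/2$. *)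

theory Defs
  imports "HOL-Probability.Probability"
begin

definition fbm_cov :: "real \<Rightarrow> real \<Rightarrow> real \<Rightarrow> real" where
  "fbm_cov H t s = (t powr (2*H) + s powr (2*H) - \<bar>t - s\<bar> powr (2*H)) / 2"

text \<open>Centered Gaussian process indexed by t >= 0 with covariance R:
  every finite linear combination of its values is a centered normal
  random variable with the variance prescribed by R (degenerate = a.s. zero).\<close>
definition centered_gaussian_process ::
  "'a measure \<Rightarrow> (real \<Rightarrow> 'a \<Rightarrow> real) \<Rightarrow> (real \<Rightarrow> real \<Rightarrow> real) \<Rightarrow> bool" where
  "centered_gaussian_process M B R \<longleftrightarrow>
     (\<forall>t\<ge>0. B t \<in> borel_measurable M) \<and>
     (\<forall>(n::nat) (ts::nat \<Rightarrow> real) (c::nat \<Rightarrow> real). (\<forall>i<n. 0 \<le> ts i) \<longrightarrow>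
        (let Y = (\<lambda>\<omega>. \<Sum>i<n. c i * B (ts i) \<omega>);
             v = (\<Sum>i<n. \<Sum>j<n. c i * c j * R (ts i) (ts j))
         in if v \<le> 0 then (AE \<omega> in M. Y \<omega> = 0)
            else distributed M lborel Y (normal_density 0 (sqrt v))))"

definition fBm :: "'a measure \<Rightarrow> real \<Rightarrow> (real \<Rightarrow> 'a \<Rightarrow> real) \<Rightarrow> bool" where
  "fBm M H B \<longleftrightarrow> 0 < H \<and> H < 1 \<and> (AE \<omega> in M. B 0 \<omega> = 0) \<and>
     centered_gaussian_process M B (fbm_cov H)"

definition RS_sum :: "(real \<Rightarrow> real) \<Rightarrow> (real \<Rightarrow> real) \<Rightarrow> (nat \<Rightarrow> real) \<Rightarrow> (nat \<Rightarrow> real) \<Rightarrow> nat \<Rightarrow> real" where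
  "RS_sum f g p xi n = (\<Sum>i<n. f (xi i) * (g (p (Suc i)) - g (p i)))"

definition has_RS_integral :: "(real \<Rightarrow> real) \<Rightarrow> (real \<Rightarrow> real) \<Rightarrow> real \<Rightarrow> real \<Rightarrow> real \<Rightarrow> bool" where
  "has_RS_integral f g a b I \<longleftrightarrow>
     (\<forall>\<epsilon>>0. \<exists>\<delta>>0. \<forall>(n::nat) p xi.
        p 0 = a \<and> p n = b \<and>
        (\<forall>i<n. p i < p (Suc i) \<and> p (Suc i) - p i < \<delta> \<and> p i \<le> xi i \<and> xi i \<le> p (Suc i))
        \<longrightarrow> \<bar>RS_sum f g p xi n - I\<bar> < \<epsilon>)"

definition RS_integral :: "(real \<Rightarrow> real) \<Rightarrow> (real \<Rightarrow> real) \<Rightarrow> real \<Rightarrow> real \<Rightarrow> real" where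
  "RS_integral f g a b = (THE I. has_RS_integral f g a b I)"

end

theory Submission
  imports Defs "HOL-Real_Asymp.Real_Asymp"
begin

text \<open>
  Fix \<open>\<gamma> \<in> (1/2, H)\<close>. Gaussian moment bounds on dyadic increments and Borel--Cantelli give,
  almost surely, a constant \<open>K\<close> with \<open>|B t - B s| \<le> K (n + 1) |t - s|\<^sup>\<gamma>\<close> on every \<open>[n, n + 1]\<close>.
  The solution \<open>X\<close> inherits this local Hoelder continuity, so the Young integral
  \<open>\<integral>\<^sub>0\<^sup>t X dX\<close> equals \<open>(X\<^sub>t\<^sup>2 - X\<^sub>0\<^sup>2) / 2\<close>. Variation of constants gives
  \<open>e\<^sup>-\<^sup>\<theta>\<^sup>t X\<^sub>t \<rightarrow> \<theta> Z\<close> with \<open>Z = \<integral>\<^sub>0\<^sup>\<infinity> e\<^sup>-\<^sup>\<theta>\<^sup>s B\<^sub>s ds\<close>, and by l'Hopital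
  \<open>\<integral>\<^sub>0\<^sup>t X\<^sub>s\<^sup>2 ds \<sim> \<theta> Z\<^sup>2 e\<^sup>2\<^sup>\<theta>\<^sup>t / 2\<close>; hence the estimator tends to \<open>\<theta>\<close> whenever \<open>Z \<noteq> 0\<close>.
  Finally \<open>Z\<close> is the pathwise limit of Gaussian Riemann sums whose variances are bounded below
  by \<open>e\<^sup>-\<^sup>4\<^sup>\<theta>\<close>, so their small-ball probabilities are uniformly small and \<open>Z \<noteq> 0\<close> almost surely.
\<close>

section \<open>Gaussian estimates\<close>

lemma normal_tail_le_moment:
  assumes "prob_space M" and D: "distributed M lborel Y (normal_density 0 \<sigma>)"
    and \<sigma>: "0 < \<sigma>" and a: "0 < a"
  shows "measure M {\<omega>\<in>space M. a \<le> \<bar>Y \<omega>\<bar>} \<le> (fact (2*k) / ((2/\<sigma>\<^sup>2)^k * fact k)) / a^(2*k)"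
proof -
  interpret prob_space M by fact
  have [measurable]: "Y \<in> borel_measurable M"
    using D by (auto simp: distributed_def)
  have "integrable lborel (\<lambda>x. normal_density 0 \<sigma> x * x^(2*k))"
    using normal_moment_even[OF \<sigma>, of 0 k] by (simp add: has_bochner_integral_iff)
  then have int: "integrable M (\<lambda>\<omega>. Y \<omega> ^ (2*k))"
    using distributed_integrable[OF D, of "\<lambda>x. x^(2*k)"] by auto
  have moment: "(\<integral>\<omega>. Y \<omega> ^ (2*k) \<partial>M) = fact (2*k) / ((2/\<sigma>\<^sup>2)^k * fact k)"
    using distributed_integral[OF D, of "\<lambda>x. x^(2*k)"] integral_normal_moment_even[OF \<sigma>, of 0 k]
    by auto
  have "a^(2*k) \<le> Y \<omega> ^ (2*k)" if "a \<le> \<bar>Y \<omega>\<bar>" for \<omega>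
  proof -
    have "a^(2*k) \<le> \<bar>Y \<omega>\<bar>^(2*k)" using a that by (intro power_mono) auto
    then show ?thesis by (simp add: power_mult power2_abs)
  qed
  then have "{\<omega>\<in>space M. a \<le> \<bar>Y \<omega>\<bar>} \<subseteq> {\<omega>\<in>space M. a^(2*k) \<le> Y \<omega> ^ (2*k)}"
    by auto
  then have "measure M {\<omega>\<in>space M. a \<le> \<bar>Y \<omega>\<bar>} \<le> measure M {\<omega>\<in>space M. a^(2*k) \<le> Y \<omega> ^ (2*k)}"
    by (intro finite_measure_mono) measurable
  also have "\<dots> \<le> (\<integral>\<omega>. Y \<omega> ^ (2*k) \<partial>M) / a^(2*k)"
    by (intro integral_Markov_inequality_measure[OF int, of "space M"]) (use a in \<open>auto simp: power_mult\<close>)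
  finally show ?thesis using moment by simp
qed

lemma normal_small_ball:
  assumes "prob_space M" and D: "distributed M lborel Y (normal_density 0 \<sigma>)"
    and \<sigma>: "0 < \<sigma>" and a: "0 < a"
  shows "measure M {\<omega>\<in>space M. \<bar>Y \<omega>\<bar> < a} \<le> 2 * a / sqrt (2 * pi * \<sigma>\<^sup>2)"
proof -
  interpret prob_space M by fact
  define k where "k = 1 / sqrt (2 * pi * \<sigma>\<^sup>2)"
  have k0: "0 \<le> k" unfolding k_def by simp
  have density_le: "normal_density 0 \<sigma> x \<le> k" for x
  proof -
    have "exp (- (x - 0)\<^sup>2 / (2 * \<sigma>\<^sup>2)) \<le> 1" by simp
    then show ?thesis unfolding normal_density_def k_def by (simp add: divide_right_mono)
  qed
  have "{\<omega>\<in>space M. \<bar>Y \<omega>\<bar> < a} = Y -` {-a<..<a} \<inter> space M" by auto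
  then have "emeasure M {\<omega>\<in>space M. \<bar>Y \<omega>\<bar> < a}
      = (\<integral>\<^sup>+x. ennreal (normal_density 0 \<sigma> x) * indicator {-a<..<a} x \<partial>lborel)"
    using distributed_emeasure[OF D] by auto
  also have "\<dots> \<le> (\<integral>\<^sup>+x. ennreal k * indicator {-a<..<a} x \<partial>lborel)"
    by (intro nn_integral_mono) (auto intro: ennreal_leI density_le split: split_indicator)
  also have "\<dots> = ennreal (k * (2 * a))"
    using a k0 by (simp add: nn_integral_cmult_indicator ennreal_mult)
  finally have "measure M {\<omega>\<in>space M. \<bar>Y \<omega>\<bar> < a} \<le> k * (2 * a)"
    using a k0 by (simp add: emeasure_eq_measure ennreal_le_iff)
  then show ?thesis unfolding k_def by simp
qed

lemma centered_gaussian_process_measurable: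
  "centered_gaussian_process M B R \<Longrightarrow> 0 \<le> t \<Longrightarrow> B t \<in> borel_measurable M"
  by (simp add: centered_gaussian_process_def)

lemma centered_gaussian_process_distributed:
  fixes n :: nat and ts c :: "nat \<Rightarrow> real"
  assumes "centered_gaussian_process M B R" and "\<forall>i<n. 0 \<le> ts i"
    and "0 < (\<Sum>i<n. \<Sum>j<n. c i * c j * R (ts i) (ts j))"
  shows "distributed M lborel (\<lambda>\<omega>. \<Sum>i<n. c i * B (ts i) \<omega>)
           (normal_density 0 (sqrt (\<Sum>i<n. \<Sum>j<n. c i * c j * R (ts i) (ts j))))"
  using assms(1)[unfolded centered_gaussian_process_def, THEN conjunct2, rule_format,
      OF assms(2)[rule_format], where c=c] assms(3)
  by (simp add: Let_def)

lemma fBm_increment_distributed: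
  assumes F: "fBm M H B" and "0 \<le> s" "0 \<le> t" "s \<noteq> t"
  shows "distributed M lborel (\<lambda>\<omega>. B t \<omega> - B s \<omega>) (normal_density 0 (\<bar>t - s\<bar> powr H))"
proof -
  define ts where "ts = (\<lambda>i::nat. if i = 0 then t else s)"
  define c where "c = (\<lambda>i::nat. if i = 0 then (1::real) else -1)"
  have var: "(\<Sum>i<2. \<Sum>j<2. c i * c j * fbm_cov H (ts i) (ts j)) = \<bar>t - s\<bar> powr (2*H)"
    using assms by (simp add: numeral_2_eq_2 c_def ts_def fbm_cov_def abs_minus_commute field_simps)
  have G: "centered_gaussian_process M B (fbm_cov H)" using F by (simp add: fBm_def)
  have "distributed M lborel (\<lambda>\<omega>. \<Sum>i<2. c i * B (ts i) \<omega>)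
      (normal_density 0 (sqrt (\<Sum>i<2. \<Sum>j<2. c i * c j * fbm_cov H (ts i) (ts j))))"
  proof (rule centered_gaussian_process_distributed[OF G])
    show "\<forall>i<2. 0 \<le> ts i" using assms by (simp add: ts_def)
    show "0 < (\<Sum>i<2. \<Sum>j<2. c i * c j * fbm_cov H (ts i) (ts j))" using assms by (simp add: var)
  qed
  moreover have "(\<lambda>\<omega>. \<Sum>i<2. c i * B (ts i) \<omega>) = (\<lambda>\<omega>. B t \<omega> - B s \<omega>)"
    by (simp add: numeral_2_eq_2 c_def ts_def)
  moreover have "sqrt (\<bar>t - s\<bar> powr (2*H)) = \<bar>t - s\<bar> powr H"
    using powr_half_sqrt_powr[of "\<bar>t - s\<bar>" "2*H"] by simp
  ultimately show ?thesis unfolding var by simp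
qed

section \<open>Local Hoelder continuity of fractional Brownian motion\<close>

lemma fBm_increment_tail:
  assumes P: "prob_space M" and F: "fBm M H B" and \<gamma>H: "\<gamma> < H"
  obtains C where "\<And>t x w. 0 \<le> t \<Longrightarrow> 0 < x \<Longrightarrow> x \<le> 1 \<Longrightarrow> 1 \<le> w \<Longrightarrow>
    measure M {\<omega>\<in>space M. w * x powr \<gamma> \<le> \<bar>B (t + x) \<omega> - B t \<omega>\<bar>} \<le> C * x\<^sup>2 / w\<^sup>2"
proof -
  (* Markov's inequality for the 2k-th moment, with k so large that 2k(H - \<gamma>) \<ge> 2. *)
  define k where "k = nat \<lceil>1 / (H - \<gamma>)\<rceil>"
  have "1 / (H - \<gamma>) \<le> real k" unfolding k_def by linarith
  moreover have "0 < 1 / (H - \<gamma>)" using \<gamma>H by simp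
  ultimately have k1: "1 \<le> k" and kk: "2 \<le> 2 * real k * (H - \<gamma>)"
    using \<gamma>H by (linarith, simp add: field_simps)
  define C where "C = (fact (2*k) / (2^k * fact k) :: real)"
  have "measure M {\<omega>\<in>space M. w * x powr \<gamma> \<le> \<bar>B (t + x) \<omega> - B t \<omega>\<bar>} \<le> C * x\<^sup>2 / w\<^sup>2"
    if t: "0 \<le> t" and x: "0 < x" "x \<le> 1" and w: "1 \<le> w" for t x w
  proof -
    have "distributed M lborel (\<lambda>\<omega>. B (t + x) \<omega> - B t \<omega>) (normal_density 0 (x powr H))"
      using fBm_increment_distributed[OF F, of t "t + x"] t x by simp
    then have "measure M {\<omega>\<in>space M. w * x powr \<gamma> \<le> \<bar>B (t + x) \<omega> - B t \<omega>\<bar>}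
        \<le> fact (2*k) / ((2/(x powr H)\<^sup>2)^k * fact k) / (w * x powr \<gamma>)^(2*k)"
      using x w by (intro normal_tail_le_moment[OF P]) auto
    also have "\<dots> = C * ((x powr H)^(2*k) / (x powr \<gamma>)^(2*k)) / w^(2*k)"
      using x by (simp add: C_def power_divide power_mult_distrib field_simps flip: power_mult)
    also have "(x powr H)^(2*k) / (x powr \<gamma>)^(2*k) = x powr ((H - \<gamma>) * (2 * real k))"
      using x by (simp add: powr_realpow[symmetric] powr_powr powr_diff[symmetric] algebra_simps)
    also have "C * x powr ((H - \<gamma>) * (2 * real k)) / w^(2*k) \<le> C * x\<^sup>2 / w\<^sup>2"
    proof (rule frac_le)
      have "x powr ((H - \<gamma>) * (2 * real k)) \<le> x powr 2"
        using x kk by (intro powr_mono') (auto simp: algebra_simps)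
      moreover have "0 \<le> C" by (simp add: C_def)
      ultimately show "C * x powr ((H - \<gamma>) * (2 * real k)) \<le> C * x\<^sup>2"
        using x by (simp add: mult_left_mono powr_numeral)
      show "w\<^sup>2 \<le> w^(2*k)" using w k1 by (intro power_increasing) auto
    qed (use w C_def in auto)
    finally show ?thesis .
  qed
  then show thesis by (rule that)
qed

lemma (in finite_measure) measure_UN_le_suminf:
  assumes "\<And>i. A i \<in> sets M" "\<And>i. measure M (A i) \<le> b i" "summable b"
  shows "measure M (\<Union>i. A i) \<le> suminf b"
proof -
  have s: "summable (\<lambda>i. measure M (A i))"
    by (rule summable_comparison_test[OF _ assms(3)]) (use assms(2) in auto)
  have "measure M (\<Union>i. A i) \<le> (\<Sum>i. measure M (A i))"
    by (rule finite_measure_subadditive_countably) (use assms(1) s in auto)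
  also have "\<dots> \<le> suminf b" by (rule suminf_le[OF assms(2) s assms(3)])
  finally show ?thesis .
qed

lemma (in finite_measure) INT_in_null_sets:
  assumes A: "\<And>j. A j \<in> sets M" and le: "\<And>j. measure M (A j) \<le> a j" and a: "a \<longlonglongrightarrow> 0"
  shows "(\<Inter>j. A j) \<in> null_sets M"
proof -
  have "measure M (\<Inter>j. A j) \<le> a j" for j
  proof -
    have "measure M (\<Inter>j. A j) \<le> measure M (A j)" by (rule finite_measure_mono) (use A in auto)
    then show ?thesis using le[of j] by linarith
  qed
  then have "measure M (\<Inter>j. A j) \<le> 0" by (intro LIMSEQ_le_const[OF a]) auto
  then show ?thesis using A by (auto simp: null_sets_def emeasure_eq_measure measure_le_0_iff)
qed

lemma (in finite_measure) dyadic_union_bound: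
  assumes E: "\<And>n m j. E n m j \<in> sets M"
    and le: "\<And>n m j. measure M (E n m j) \<le> b / (real n + 1)\<^sup>2 * (1/4)^m"
  shows "measure M (\<Union>n. \<Union>m. \<Union>j\<in>{..<(2::nat)^m}. E n m j) \<le> 2 * b * (\<Sum>n. 1 / (real n + 1)\<^sup>2)"
proof -
  have "summable (\<lambda>n::nat. inverse (real (Suc n) ^ 2))"
    using inverse_power_summable[of 2, where 'a=real] by (subst summable_Suc_iff) simp
  then have S: "summable (\<lambda>n::nat. 1 / (real n + 1)\<^sup>2)"
    by (simp add: inverse_eq_divide add.commute)
  have geom: "summable (\<lambda>m::nat. (1/2::real)^m)" by (rule summable_geometric) simp
  have [measurable]: "E n m j \<in> sets M" for n m j by (rule E)
  have "measure M (\<Union>j\<in>{..<(2::nat)^m}. E n m j) \<le> b / (real n + 1)\<^sup>2 * (1/2)^m" for n m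
  proof -
    have "measure M (\<Union>j\<in>{..<(2::nat)^m}. E n m j) \<le> (\<Sum>j<(2::nat)^m. measure M (E n m j))"
      by (intro measure_UNION_le) (auto simp: E)
    also have "\<dots> \<le> 2^m * (b / (real n + 1)\<^sup>2 * (1/4)^m)"
      using sum_mono[of "{..<(2::nat)^m}" "\<lambda>j. measure M (E n m j)", OF le] by simp
    also have "(1/4::real)^m = (1/2)^m * (1/2)^m" by (simp flip: power_mult_distrib)
    also have "(2::real)^m * (b / (real n + 1)\<^sup>2 * ((1/2)^m * (1/2)^m))
        = b / (real n + 1)\<^sup>2 * (1/2)^m * ((2::real)^m * (1/2)^m)"
      by (simp only: mult_ac)
    also have "(2::real)^m * (1/2)^m = 1" by (simp flip: power_mult_distrib)
    finally show ?thesis by simp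
  qed
  then have "measure M (\<Union>m. \<Union>j\<in>{..<(2::nat)^m}. E n m j) \<le> (\<Sum>m. b / (real n + 1)\<^sup>2 * (1/2)^m)" for n
    by (intro measure_UN_le_suminf summable_mult geom) measurable
  also have "(\<Sum>m. b / (real n + 1)\<^sup>2 * (1/2)^m) = 2 * b * (1 / (real n + 1)\<^sup>2)" for n
    using suminf_mult[OF geom, of "b / (real n + 1)\<^sup>2"] suminf_geometric[of "1/2::real"] by simp
  finally have "measure M (\<Union>n. \<Union>m. \<Union>j\<in>{..<(2::nat)^m}. E n m j) \<le> (\<Sum>n. 2 * b * (1 / (real n + 1)\<^sup>2))"
    by (intro measure_UN_le_suminf summable_mult S) measurable
  also have "\<dots> = 2 * b * (\<Sum>n. 1 / (real n + 1)\<^sup>2)" by (rule suminf_mult[OF S])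
  finally show ?thesis .
qed

lemma fBm_dyadic_increments_AE:
  assumes P: "prob_space M" and F: "fBm M H B" and \<gamma>H: "\<gamma> < H"
  shows "AE \<omega> in M. \<exists>L\<ge>0. \<forall>n m j::nat. j < 2^m \<longrightarrow>
    \<bar>B (real n + real (Suc j) / 2^m) \<omega> - B (real n + real j / 2^m) \<omega>\<bar> \<le> L * (real n + 1) * (1/2^m) powr \<gamma>"
proof -
  interpret prob_space M by fact
  have [measurable]: "B t \<in> borel_measurable M" if "0 \<le> t" for t
    using F that by (auto simp: fBm_def centered_gaussian_process_measurable)
  obtain C where tail: "\<And>t x w. 0 \<le> t \<Longrightarrow> 0 < x \<Longrightarrow> x \<le> 1 \<Longrightarrow> 1 \<le> w \<Longrightarrow>
    prob {\<omega>\<in>space M. w * x powr \<gamma> \<le> \<bar>B (t + x) \<omega> - B t \<omega>\<bar>} \<le> C * x\<^sup>2 / w\<^sup>2"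
    using fBm_increment_tail[OF P F \<gamma>H] by blast
  define p where "p = (\<lambda>(n::nat) (m::nat) (j::nat). real n + real j / 2^m)"
  have p: "0 \<le> p n m j" "p n m (Suc j) = p n m j + 1/2^m" for n m j by (simp_all add: p_def field_simps)
  define E where "E = (\<lambda>(r::nat) n m j. {\<omega>\<in>space M.
    real r * (real n + 1) * (1/2^m) powr \<gamma> \<le> \<bar>B (p n m (Suc j)) \<omega> - B (p n m j) \<omega>\<bar>})"
  have [measurable]: "E r n m j \<in> sets M" for r n m j unfolding E_def using p by measurable
  define S where "S = (\<Sum>n::nat. 1 / (real n + 1)\<^sup>2)"
  have E_le: "prob (E (Suc r) n m j) \<le> C / (real (Suc r))\<^sup>2 / (real n + 1)\<^sup>2 * (1/4)^m" for r n m j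
  proof -
    have "1 \<le> real (Suc r) * (real n + 1)" using mult_mono[of 1 "real (Suc r)" 1 "real n + 1"] by simp
    then have "prob (E (Suc r) n m j) \<le> C * (1/2^m)\<^sup>2 / (real (Suc r) * (real n + 1))\<^sup>2"
      unfolding E_def p(2) by (intro tail) (use p(1) in auto)
    also have "(1/2^m::real)\<^sup>2 = (1/4)^m"
      by (simp add: power_one_over power2_eq_square flip: power_mult_distrib)
    finally show ?thesis by (simp add: power_mult_distrib)
  qed
  have "(\<Inter>r. \<Union>n. \<Union>m. \<Union>j\<in>{..<(2::nat)^m}. E (Suc r) n m j) \<in> null_sets M"
  proof (rule INT_in_null_sets)
    show "prob (\<Union>n. \<Union>m. \<Union>j\<in>{..<(2::nat)^m}. E (Suc r) n m j) \<le> 2 * (C / (real (Suc r))\<^sup>2) * S" for r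
      unfolding S_def by (rule dyadic_union_bound[OF _ E_le]) simp
    show "(\<lambda>r. 2 * (C / (real (Suc r))\<^sup>2) * S) \<longlonglongrightarrow> 0" by real_asymp
  qed simp
  then show ?thesis
  proof (rule AE_I', safe)
    fix \<omega> r assume \<omega>: "\<omega> \<in> space M" and "\<not> (\<exists>L\<ge>0. \<forall>n m j::nat. j < 2^m \<longrightarrow>
      \<bar>B (real n + real (Suc j) / 2^m) \<omega> - B (real n + real j / 2^m) \<omega>\<bar> \<le> L * (real n + 1) * (1/2^m) powr \<gamma>)"
    then have "\<not> (\<forall>n m j::nat. j < 2^m \<longrightarrow>
      \<bar>B (real n + real (Suc j) / 2^m) \<omega> - B (real n + real j / 2^m) \<omega>\<bar> \<le> real (Suc r) * (real n + 1) * (1/2^m) powr \<gamma>)"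
      using of_nat_0_le_iff by blast
    then obtain n m j :: nat where "j < 2^m" and "\<omega> \<in> E (Suc r) n m j"
      using \<omega> unfolding E_def p_def by (auto simp: not_le intro: less_imp_le)
    then show "\<omega> \<in> (\<Union>n. \<Union>m. \<Union>j\<in>{..<(2::nat)^m}. E (Suc r) n m j)" by blast
  qed
qed

definition dyadic_floor :: "nat \<Rightarrow> real \<Rightarrow> real" where
  "dyadic_floor m x = of_int \<lfloor>x * 2^m\<rfloor> / 2^m"

lemma dyadic_floor_bounds: "dyadic_floor m x \<le> x" "x - 1/2^m < dyadic_floor m x"
proof -
  have "of_int \<lfloor>x * 2^m\<rfloor> \<le> x * 2^m" "x * 2^m < of_int \<lfloor>x * 2^m\<rfloor> + 1" by linarith+
  then show "dyadic_floor m x \<le> x" "x - 1/2^m < dyadic_floor m x" unfolding dyadic_floor_def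
    by (simp_all add: pos_less_divide_eq pos_divide_le_eq left_diff_distrib)
qed

lemma dyadic_floor_in_unit:
  assumes "x \<in> {0..1}" shows "dyadic_floor m x \<in> {0..1}"
proof -
  have "0 \<le> dyadic_floor m x" using assms by (simp add: dyadic_floor_def)
  then show ?thesis using dyadic_floor_bounds(1)[where m=m and x=x] assms by auto
qed

lemma dyadic_floor_tendsto: "(\<lambda>m. dyadic_floor m x) \<longlonglongrightarrow> x"
proof (rule real_tendsto_sandwich[OF _ _ _ tendsto_const])
  show "(\<lambda>m. x - (1/2::real)^m) \<longlonglongrightarrow> x"
    using tendsto_diff[OF tendsto_const LIMSEQ_power_zero[of "1/2::real"]] by simp
qed (use dyadic_floor_bounds in \<open>auto simp: power_one_over less_imp_le\<close>)

lemma floor_dyadic_Suc: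
  fixes x :: real
  shows "\<lfloor>x * 2^Suc m\<rfloor> = 2 * \<lfloor>x * 2^m\<rfloor> \<or> \<lfloor>x * 2^Suc m\<rfloor> = 2 * \<lfloor>x * 2^m\<rfloor> + 1"
proof -
  define f where "f = \<lfloor>x * 2^m\<rfloor>"
  have "of_int f \<le> x * 2^m" "x * 2^m < of_int f + 1" unfolding f_def by linarith+
  then have "of_int (2*f) \<le> x * 2^Suc m" "x * 2^Suc m < of_int (2*f) + 2" by auto
  then have "2*f \<le> \<lfloor>x * 2^Suc m\<rfloor>" "\<lfloor>x * 2^Suc m\<rfloor> < 2*f + 2"
    by (simp_all add: le_floor_iff floor_less_iff)
  then show ?thesis unfolding f_def by linarith
qed

lemma dyadic_scale_exists:
  fixes \<delta> :: real assumes "0 < \<delta>" "\<delta> \<le> 1"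
  obtains m :: nat where "1/2^(Suc m) < \<delta>" "\<delta> \<le> 1/2^m"
proof -
  obtain M :: nat where M: "(1/2::real)^M < \<delta>" using real_arch_pow_inv[OF assms(1), of "1/2"] by auto
  define M0 where "M0 = (LEAST M::nat. (1/2::real)^M < \<delta>)"
  have M0: "(1/2::real)^M0 < \<delta>" unfolding M0_def by (rule LeastI[of _ M]) (rule M)
  then obtain m where m: "M0 = Suc m" using assms by (cases M0) auto
  have "\<not> (1/2::real)^m < \<delta>" using not_less_Least[of m "\<lambda>M. (1/2::real)^M < \<delta>"] m unfolding M0_def by auto
  then show thesis using M0 m that by (auto simp: power_one_over)
qed

lemma powr_one_over_two_pow: "(1/2^m::real) powr \<gamma> = ((1/2) powr \<gamma>)^m"
proof -
  have "(1/2^m::real) = (1/2) powr (real m)" by (simp add: powr_realpow power_one_over)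
  then show ?thesis by (simp add: powr_powr powr_realpow[symmetric] mult.commute)
qed

context
  fixes g :: "real \<Rightarrow> real" and L \<gamma> :: real
  assumes cont: "continuous_on {0..1} g" and \<gamma>: "0 < \<gamma>" and L: "0 \<le> L"
    and inc: "\<And>m j. j < (2::nat)^m \<Longrightarrow> \<bar>g (real (Suc j) / 2^m) - g (real j / 2^m)\<bar> \<le> L * (1/2^m) powr \<gamma>"
begin

lemma dyadic_floor_adjacent:
  assumes x: "x \<in> {0..1}" and x': "x' \<in> {0..1}"
    and adj: "\<lfloor>x' * 2^m\<rfloor> = \<lfloor>x * 2^m\<rfloor> \<or> \<lfloor>x' * 2^m\<rfloor> = \<lfloor>x * 2^m\<rfloor> + 1"
  shows "\<bar>g (dyadic_floor m x') - g (dyadic_floor m x)\<bar> \<le> L * (1/2^m) powr \<gamma>"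
proof (cases "\<lfloor>x' * 2^m\<rfloor> = \<lfloor>x * 2^m\<rfloor>")
  case True then show ?thesis using L by (simp add: dyadic_floor_def)
next
  case False
  then have next_floor: "\<lfloor>x' * 2^m\<rfloor> = \<lfloor>x * 2^m\<rfloor> + 1" using adj by auto
  define j where "j = nat \<lfloor>x * 2^m\<rfloor>"
  have j: "real j = of_int \<lfloor>x * 2^m\<rfloor>" unfolding j_def using x by simp
  have "x' * 2^m \<le> 2^m" using x' by auto
  then have "\<lfloor>x' * 2^m\<rfloor> \<le> 2^m" by (metis floor_mono floor_of_int of_int_numeral of_int_power)
  then have "j < 2^m" using next_floor x unfolding j_def by (simp add: nat_less_iff)
  moreover have "dyadic_floor m x' = real (Suc j) / 2^m" "dyadic_floor m x = real j / 2^m"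
    unfolding dyadic_floor_def using next_floor j by auto
  ultimately show ?thesis using inc by simp
qed

lemma dyadic_floor_Suc_diff:
  assumes x: "x \<in> {0..1}"
  shows "\<bar>g (dyadic_floor (Suc m) x) - g (dyadic_floor m x)\<bar> \<le> L * (1/2^Suc m) powr \<gamma>"
proof (cases "\<lfloor>x * 2^Suc m\<rfloor> = 2 * \<lfloor>x * 2^m\<rfloor>")
  case True
  then have "dyadic_floor (Suc m) x = dyadic_floor m x" unfolding dyadic_floor_def by simp
  then show ?thesis using L by simp
next
  case False
  then have odd: "\<lfloor>x * 2^Suc m\<rfloor> = 2 * \<lfloor>x * 2^m\<rfloor> + 1" using floor_dyadic_Suc[of x m] by auto
  define y where "y = real_of_int (2 * \<lfloor>x * 2^m\<rfloor>) / 2^Suc m"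
  have "y = dyadic_floor m x" unfolding y_def dyadic_floor_def by simp
  then have y: "y \<in> {0..1}" using dyadic_floor_in_unit[OF x] by simp
  have "y * 2^Suc m = real_of_int (2 * \<lfloor>x * 2^m\<rfloor>)" unfolding y_def by simp
  then have "\<lfloor>y * 2^Suc m\<rfloor> = 2 * \<lfloor>x * 2^m\<rfloor>" by (metis floor_of_int)
  then have "dyadic_floor (Suc m) y = dyadic_floor m x"
    and "\<bar>g (dyadic_floor (Suc m) x) - g (dyadic_floor (Suc m) y)\<bar> \<le> L * (1/2^Suc m) powr \<gamma>"
    using dyadic_floor_adjacent[OF y x, of "Suc m"] odd by (auto simp: dyadic_floor_def)
  then show ?thesis by simp
qed

lemma dyadic_floor_approx:
  assumes x: "x \<in> {0..1}"
  shows "\<bar>g x - g (dyadic_floor m x)\<bar> \<le> L * ((1/2) powr \<gamma>)^m / (1 - (1/2) powr \<gamma>)"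
proof -
  define \<rho> where "\<rho> = (1/2::real) powr \<gamma>"
  have \<rho>: "0 < \<rho>" "\<rho> < 1" unfolding \<rho>_def using \<gamma> powr_less_mono'[of "1/2::real" 0 \<gamma>] by auto
  have chain: "\<bar>g (dyadic_floor (m + k) x) - g (dyadic_floor m x)\<bar> \<le> L * \<rho>^m / (1 - \<rho>)" for k
  proof -
    have "\<bar>g (dyadic_floor (m + k) x) - g (dyadic_floor m x)\<bar> \<le> (\<Sum>i<k. L * \<rho>^(Suc (m + i)))"
    proof (induction k)
      case (Suc k)
      have "\<bar>g (dyadic_floor (Suc (m + k)) x) - g (dyadic_floor (m + k) x)\<bar> \<le> L * \<rho>^(Suc (m + k))"
        using dyadic_floor_Suc_diff[OF x, of "m + k"] unfolding \<rho>_def powr_one_over_two_pow .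
      then show ?case using Suc.IH by simp
    qed simp
    also have "\<dots> = L * \<rho>^(Suc m) * (\<Sum>i<k. \<rho>^i)"
      by (simp add: sum_distrib_left power_add mult_ac)
    also have "\<dots> \<le> L * \<rho>^m * (\<Sum>i. \<rho>^i)"
      using \<rho> L by (intro mult_mono sum_le_suminf summable_geometric)
        (auto simp: power_Suc2 mult_le_cancel_left1 sum_nonneg)
    also have "\<dots> = L * \<rho>^m / (1 - \<rho>)" using \<rho> by (simp add: suminf_geometric divide_inverse)
    finally show ?thesis .
  qed
  have "(\<lambda>k. dyadic_floor (m + k) x) \<longlonglongrightarrow> x"
    using LIMSEQ_ignore_initial_segment[OF dyadic_floor_tendsto[of x], of m] by (simp add: add.commute)
  then have "(\<lambda>k. \<bar>g (dyadic_floor (m + k) x) - g (dyadic_floor m x)\<bar>) \<longlonglongrightarrow> \<bar>g x - g (dyadic_floor m x)\<bar>"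
    by (intro tendsto_intros continuous_on_tendsto_compose[OF cont] x)
      (use dyadic_floor_in_unit[OF x] in auto)
  then show ?thesis using chain unfolding \<rho>_def by (intro LIMSEQ_le_const2) auto
qed

lemma holder_of_dyadic_increments:
  assumes s: "s \<in> {0..1}" and t: "t \<in> {0..1}"
  shows "\<bar>g t - g s\<bar> \<le> 2 powr \<gamma> * (1 + 2 / (1 - (1/2) powr \<gamma>)) * L * \<bar>t - s\<bar> powr \<gamma>"
proof (cases "s = t")
  case False
  define \<rho> where "\<rho> = (1/2::real) powr \<gamma>"
  have \<rho>1: "\<rho> < 1" unfolding \<rho>_def using \<gamma> powr_less_mono'[of "1/2::real" 0 \<gamma>] by auto
  define a b where "a = min s t" and "b = max s t"
  have ab: "a < b" "a \<in> {0..1}" "b \<in> {0..1}" "\<bar>t - s\<bar> = b - a" "\<bar>g t - g s\<bar> = \<bar>g b - g a\<bar>"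
    using False s t unfolding a_def b_def by (auto simp: abs_minus_commute min_def max_def)
  obtain m where m: "1/2^(Suc m) < b - a" "b - a \<le> 1/2^m"
    using dyadic_scale_exists[of "b - a"] ab by auto
  have "a * 2^m \<le> b * 2^m" "b * 2^m \<le> a * 2^m + 1" using ab m by (auto simp: field_simps)
  then have "\<lfloor>a * 2^m\<rfloor> \<le> \<lfloor>b * 2^m\<rfloor>" "\<lfloor>b * 2^m\<rfloor> \<le> \<lfloor>a * 2^m\<rfloor> + 1"
    by (auto intro: floor_mono) (metis floor_add_int floor_mono of_int_1)
  then have adj: "\<lfloor>b * 2^m\<rfloor> = \<lfloor>a * 2^m\<rfloor> \<or> \<lfloor>b * 2^m\<rfloor> = \<lfloor>a * 2^m\<rfloor> + 1" by linarith
  have "\<bar>g b - g a\<bar> \<le> \<bar>g b - g (dyadic_floor m b)\<bar> + \<bar>g (dyadic_floor m b) - g (dyadic_floor m a)\<bar>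
      + \<bar>g (dyadic_floor m a) - g a\<bar>"
    by linarith
  also have "\<dots> \<le> L * \<rho>^m / (1 - \<rho>) + L * \<rho>^m + L * \<rho>^m / (1 - \<rho>)"
    using dyadic_floor_approx[OF ab(3), of m] dyadic_floor_approx[OF ab(2), of m]
      dyadic_floor_adjacent[OF ab(2) ab(3) adj]
    unfolding \<rho>_def powr_one_over_two_pow by (simp add: abs_minus_commute)
  also have "\<dots> = (1 + 2 / (1 - \<rho>)) * L * \<rho>^m" by (simp add: field_simps)
  also have "\<dots> \<le> (1 + 2 / (1 - \<rho>)) * L * (2 powr \<gamma> * (b - a) powr \<gamma>)"
  proof (rule mult_left_mono)
    have "\<rho>^m = (1/2^m) powr \<gamma>" unfolding \<rho>_def powr_one_over_two_pow ..
    also have "\<dots> \<le> (2 * (b - a)) powr \<gamma>"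
      using m \<gamma> by (intro powr_mono2) (auto simp: field_simps)
    also have "\<dots> = 2 powr \<gamma> * (b - a) powr \<gamma>" using ab by (subst powr_mult) auto
    finally show "\<rho>^m \<le> 2 powr \<gamma> * (b - a) powr \<gamma>" .
  qed (use \<rho>1 L in simp)
  finally show ?thesis using ab unfolding \<rho>_def by (simp add: mult_ac)
qed simp

end

definition holder_on_unit_intervals :: "real \<Rightarrow> real \<Rightarrow> (real \<Rightarrow> real) \<Rightarrow> bool" where
  "holder_on_unit_intervals K \<gamma> f \<longleftrightarrow>
     (\<forall>n::nat. \<forall>s\<in>{real n..real n + 1}. \<forall>t\<in>{real n..real n + 1}.
        \<bar>f t - f s\<bar> \<le> K * (real n + 1) * \<bar>t - s\<bar> powr \<gamma>)"

lemma holder_on_unit_intervalsD: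
  "holder_on_unit_intervals K \<gamma> f \<Longrightarrow> s \<in> {real n..real n + 1} \<Longrightarrow> t \<in> {real n..real n + 1} \<Longrightarrow>
    \<bar>f t - f s\<bar> \<le> K * (real n + 1) * \<bar>t - s\<bar> powr \<gamma>"
  by (simp add: holder_on_unit_intervals_def)

lemma holder_on_unit_intervals_of_dyadic:
  assumes cont: "continuous_on {0..} f" and \<gamma>: "0 < \<gamma>" and L: "0 \<le> L"
    and dyadic: "\<forall>n m j::nat. j < 2^m \<longrightarrow>
      \<bar>f (real n + real (Suc j) / 2^m) - f (real n + real j / 2^m)\<bar> \<le> L * (real n + 1) * (1/2^m) powr \<gamma>"
  shows "holder_on_unit_intervals (2 powr \<gamma> * (1 + 2 / (1 - (1/2) powr \<gamma>)) * L) \<gamma> f"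
  unfolding holder_on_unit_intervals_def
proof (intro allI ballI)
  fix n :: nat and s t assume s: "s \<in> {real n..real n + 1}" and t: "t \<in> {real n..real n + 1}"
  have "continuous_on {0..1} (\<lambda>x. f (real n + x))"
    by (intro continuous_on_compose2[OF cont] continuous_intros) auto
  then have "\<bar>f (real n + (t - real n)) - f (real n + (s - real n))\<bar>
      \<le> 2 powr \<gamma> * (1 + 2 / (1 - (1/2) powr \<gamma>)) * (L * (real n + 1)) * \<bar>(t - real n) - (s - real n)\<bar> powr \<gamma>"
    by (rule holder_of_dyadic_increments[OF _ \<gamma>]) (use L dyadic s t in auto)
  then show "\<bar>f t - f s\<bar> \<le> 2 powr \<gamma> * (1 + 2 / (1 - (1/2) powr \<gamma>)) * L * (real n + 1) * \<bar>t - s\<bar> powr \<gamma>"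
    by (simp add: mult_ac)
qed

lemma fBm_holder_on_unit_intervals_AE:
  assumes "prob_space M" and "fBm M H B" and cont: "\<forall>\<omega>. continuous_on {0..} (\<lambda>t. B t \<omega>)"
    and \<gamma>: "0 < \<gamma>" "\<gamma> < H"
  shows "AE \<omega> in M. \<exists>K\<ge>0. holder_on_unit_intervals K \<gamma> (\<lambda>t. B t \<omega>)"
  using fBm_dyadic_increments_AE[OF assms(1,2) \<gamma>(2)]
proof eventually_elim
  case (elim \<omega>)
  then obtain L where "0 \<le> L" and dyadic: "\<forall>n m j::nat. j < 2^m \<longrightarrow>
      \<bar>B (real n + real (Suc j) / 2^m) \<omega> - B (real n + real j / 2^m) \<omega>\<bar> \<le> L * (real n + 1) * (1/2^m) powr \<gamma>"
    by blast
  moreover have "(1/2::real) powr \<gamma> < 1" using \<gamma> powr_less_mono'[of "1/2::real" 0 \<gamma>] by auto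
  ultimately have "0 \<le> 2 powr \<gamma> * (1 + 2 / (1 - (1/2) powr \<gamma>)) * L" by simp
  then show ?case
    using holder_on_unit_intervals_of_dyadic[OF cont[rule_format] \<gamma>(1) \<open>0 \<le> L\<close> dyadic] by blast
qed

context
  fixes f :: "real \<Rightarrow> real" and K \<gamma> :: real
  assumes holder: "holder_on_unit_intervals K \<gamma> f" and K: "0 \<le> K" and \<gamma>: "0 < \<gamma>"
begin

lemma holder_on_unit_intervals_local:
  assumes "0 \<le> s" "s \<le> T" "0 \<le> t" "t \<le> T" "\<bar>t - s\<bar> \<le> 1"
  shows "\<bar>f t - f s\<bar> \<le> 2 * K * (T + 2) * \<bar>t - s\<bar> powr \<gamma>"
proof -
  have ordered: "\<bar>f b - f a\<bar> \<le> 2 * K * (T + 2) * (b - a) powr \<gamma>"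
    if ab: "0 \<le> a" "a \<le> b" "b \<le> T" "b - a \<le> 1" for a b
  proof -
    define n where "n = nat \<lfloor>a\<rfloor>"
    have n: "real n \<le> a" "a < real n + 1" "real n + 2 \<le> T + 2" unfolding n_def using ab by linarith+
    show ?thesis
    proof (cases "b \<le> real n + 1")
      case True
      have "\<bar>f b - f a\<bar> \<le> K * (real n + 1) * (b - a) powr \<gamma>"
        using holder_on_unit_intervalsD[OF holder, of a n b] n ab True by auto
      also have "\<dots> \<le> 2 * K * (T + 2) * (b - a) powr \<gamma>"
      proof (rule mult_right_mono)
        have "K * (real n + 1) \<le> K * (2 * (T + 2))" using n K by (intro mult_left_mono) auto
        then show "K * (real n + 1) \<le> 2 * K * (T + 2)" by (simp add: mult_ac)
      qed simp
      finally show ?thesis .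
    next
      case False
      have "\<bar>f b - f (real n + 1)\<bar> \<le> K * (real (Suc n) + 1) * (b - (real n + 1)) powr \<gamma>"
        using holder_on_unit_intervalsD[OF holder, of "real n + 1" "Suc n" b] False n ab by auto
      also have "\<dots> \<le> K * (real n + 2) * (b - a) powr \<gamma>"
        using False n \<gamma> K by (intro mult_mono powr_mono2) auto
      finally have right: "\<bar>f b - f (real n + 1)\<bar> \<le> K * (real n + 2) * (b - a) powr \<gamma>" .
      have "\<bar>f (real n + 1) - f a\<bar> \<le> K * (real n + 1) * (real n + 1 - a) powr \<gamma>"
        using holder_on_unit_intervalsD[OF holder, of a n "real n + 1"] n by auto
      also have "\<dots> \<le> K * (real n + 2) * (b - a) powr \<gamma>"
        using False n \<gamma> K by (intro mult_mono powr_mono2) auto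
      finally have left: "\<bar>f (real n + 1) - f a\<bar> \<le> K * (real n + 2) * (b - a) powr \<gamma>" .
      have "\<bar>f b - f a\<bar> \<le> 2 * (K * (real n + 2) * (b - a) powr \<gamma>)" using left right by linarith
      also have "\<dots> = 2 * K * (real n + 2) * (b - a) powr \<gamma>" by simp
      also have "\<dots> \<le> 2 * K * (T + 2) * (b - a) powr \<gamma>"
        using n K by (intro mult_right_mono mult_left_mono) auto
      finally show ?thesis .
    qed
  qed
  show ?thesis
    using ordered[of s t] ordered[of t s] assms by (cases "s \<le> t") (auto simp: abs_minus_commute)
qed

lemma holder_on_unit_intervals_growth:
  assumes t: "0 \<le> t"
  shows "\<bar>f t\<bar> \<le> \<bar>f 0\<bar> + K * (t + 1)\<^sup>2"
proof -
  have step: "\<bar>f t - f (real n)\<bar> \<le> K * (real n + 1)" if "t \<in> {real n..real n + 1}" for n t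
  proof -
    have "\<bar>f t - f (real n)\<bar> \<le> K * (real n + 1) * \<bar>t - real n\<bar> powr \<gamma>"
      using holder_on_unit_intervalsD[OF holder, of "real n" n t] that by auto
    also have "\<dots> \<le> K * (real n + 1) * 1 powr \<gamma>"
      using that \<gamma> K by (intro mult_left_mono powr_mono2) auto
    finally show ?thesis by simp
  qed
  have integers: "\<bar>f (real n) - f 0\<bar> \<le> K * (real n)\<^sup>2" for n :: nat
  proof (induction n)
    case (Suc n)
    have "\<bar>f (real (Suc n)) - f 0\<bar> \<le> K * (real n)\<^sup>2 + K * (real n + 1)"
      using step[of "real (Suc n)" n] Suc.IH by simp
    also have "\<dots> \<le> K * (real (Suc n))\<^sup>2" using K by (simp add: power2_eq_square algebra_simps)
    finally show ?case .
  qed simp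
  define n where "n = nat \<lfloor>t\<rfloor>"
  have n: "real n \<le> t" "t < real n + 1" unfolding n_def using t by linarith+
  have "\<bar>f t - f 0\<bar> \<le> K * (real n)\<^sup>2 + K * (real n + 1)"
    using step[of t n] integers[of n] n by simp
  also have "\<dots> \<le> K * (real n + 1)\<^sup>2" using K by (simp add: power2_eq_square algebra_simps)
  also have "\<dots> \<le> K * (t + 1)\<^sup>2" using K n by (intro mult_left_mono power_mono) auto
  finally show ?thesis by linarith
qed

end

lemma power2_le_exp:
  fixes a y :: real assumes a: "0 < a" and y: "0 \<le> y"
  shows "y\<^sup>2 \<le> 4 / a\<^sup>2 * exp (a * y)"
proof -
  have "a * y / 2 \<le> exp (a * y / 2)" using exp_ge_add_one_self[of "a * y / 2"] by linarith
  then have "(a * y / 2)\<^sup>2 \<le> (exp (a * y / 2))\<^sup>2" using a y by (intro power_mono) auto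
  also have "(exp (a * y / 2))\<^sup>2 = exp (a * y)" by (simp add: power2_eq_square flip: exp_add)
  finally show ?thesis using a by (simp add: power_mult_distrib power_divide field_simps)
qed

lemma holder_on_unit_intervals_exp_bound:
  assumes "holder_on_unit_intervals K \<gamma> f" "0 \<le> K" "0 < \<gamma>" and a: "0 < a" and t: "0 \<le> t"
  shows "\<bar>f t\<bar> \<le> \<bar>f 0\<bar> + K * (4 / a\<^sup>2 * exp a) * exp (a * t)"
proof -
  have "K * (t + 1)\<^sup>2 \<le> K * (4 / a\<^sup>2 * exp (a * (t + 1)))"
    using power2_le_exp[OF a, of "t + 1"] t assms(2) by (intro mult_left_mono) auto
  also have "\<dots> = K * (4 / a\<^sup>2 * exp a) * exp (a * t)"
    by (simp add: distrib_left exp_add)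
  finally show ?thesis using holder_on_unit_intervals_growth[OF assms(1-3) t] by linarith
qed

section \<open>The Young integral of a path against itself\<close>

lemma has_RS_integral_unique:
  assumes I: "has_RS_integral f g a b I" and J: "has_RS_integral f g a b J" and ab: "a < b"
  shows "I = J"
proof (rule ccontr)
  assume "I \<noteq> J"
  then have e: "0 < \<bar>I - J\<bar> / 2" by simp
  obtain d1 where d1: "d1 > 0" "\<forall>(n::nat) p xi. p 0 = a \<and> p n = b \<and>
        (\<forall>i<n. p i < p (Suc i) \<and> p (Suc i) - p i < d1 \<and> p i \<le> xi i \<and> xi i \<le> p (Suc i))
        \<longrightarrow> \<bar>RS_sum f g p xi n - I\<bar> < \<bar>I - J\<bar> / 2" using I e unfolding has_RS_integral_def by blast
  obtain d2 where d2: "d2 > 0" "\<forall>(n::nat) p xi. p 0 = a \<and> p n = b \<and>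
        (\<forall>i<n. p i < p (Suc i) \<and> p (Suc i) - p i < d2 \<and> p i \<le> xi i \<and> xi i \<le> p (Suc i))
        \<longrightarrow> \<bar>RS_sum f g p xi n - J\<bar> < \<bar>I - J\<bar> / 2" using J e unfolding has_RS_integral_def by blast
  obtain n :: nat where n: "(b - a) / min d1 d2 < real n" using reals_Archimedean2 by blast
  have "0 < (b - a) / min d1 d2" using ab d1 d2 by simp
  then have n0: "0 < n" using n by (cases n) auto
  define p where "p = (\<lambda>i::nat. a + real i * (b - a) / real n)"
  have step: "p (Suc i) - p i = (b - a) / real n" for i
    by (simp add: p_def add_divide_distrib[symmetric] algebra_simps)
  have small: "(b - a) / real n < min d1 d2"
  proof -
    have m0: "0 < min d1 d2" using d1 d2 by simp
    have "b - a < real n * min d1 d2" using n m0 by (simp only: divide_less_eq)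
    moreover have "(0::real) < real n" using n0 by simp
    ultimately show ?thesis by (simp only: pos_divide_less_eq mult.commute)
  qed
  have pos: "0 < (b - a) / real n" using ab n0 by simp
  have stp: "p i < p (Suc i)" for i using step[of i] pos by linarith
  have fine: "p 0 = a \<and> p n = b \<and>
      (\<forall>i<n. p i < p (Suc i) \<and> p (Suc i) - p i < d \<and> p i \<le> p i \<and> p i \<le> p (Suc i))"
    if "min d1 d2 \<le> d" for d using n0 step small that stp less_imp_le by (auto simp: p_def)
  have "\<bar>RS_sum f g p p n - I\<bar> < \<bar>I - J\<bar> / 2" using d1(2) fine[of d1] by simp
  moreover have "\<bar>RS_sum f g p p n - J\<bar> < \<bar>I - J\<bar> / 2" using d2(2) fine[of d2] by simp
  ultimately show False by (auto simp: abs_less_iff abs_if split: if_splits)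
qed

lemma RS_integral_eqI: "has_RS_integral f g a b I \<Longrightarrow> a < b \<Longrightarrow> RS_integral f g a b = I"
  unfolding RS_integral_def by (auto intro: has_RS_integral_unique)

lemma self_RS_term_le:
  fixes x y z c :: real
  assumes "\<bar>y - x\<bar> \<le> c" "\<bar>y - z\<bar> \<le> c" "\<bar>z - x\<bar> \<le> c"
  shows "\<bar>y * (z - x) - (z\<^sup>2 / 2 - x\<^sup>2 / 2)\<bar> \<le> c\<^sup>2"
proof -
  have "y * (z - x) - (z\<^sup>2 / 2 - x\<^sup>2 / 2) = ((y - x) + (y - z)) / 2 * (z - x)"
    by (simp add: power2_eq_square field_simps)
  then have "\<bar>y * (z - x) - (z\<^sup>2 / 2 - x\<^sup>2 / 2)\<bar> = \<bar>((y - x) + (y - z)) / 2\<bar> * \<bar>z - x\<bar>"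
    by (simp only: abs_mult)
  also have "\<dots> \<le> c * c"
    using abs_triangle_ineq[of "y - x" "y - z"] assms by (intro mult_mono) auto
  finally show ?thesis by (simp add: power2_eq_square)
qed

lemma RS_term_self_le:
  fixes f :: "real \<Rightarrow> real"
  assumes hol: "\<And>x y. x \<in> {u..v} \<Longrightarrow> y \<in> {u..v} \<Longrightarrow> \<bar>f x - f y\<bar> \<le> C * \<bar>x - y\<bar> powr \<gamma>"
    and C: "0 \<le> C" and \<gamma>: "1/2 \<le> \<gamma>" and uv: "u < v" "v - u < \<delta>" and \<xi>: "\<xi> \<in> {u..v}"
  shows "\<bar>f \<xi> * (f v - f u) - ((f v)\<^sup>2 / 2 - (f u)\<^sup>2 / 2)\<bar> \<le> C\<^sup>2 * \<delta> powr (2 * \<gamma> - 1) * (v - u)"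
proof -
  have bound: "\<bar>f x - f y\<bar> \<le> C * (v - u) powr \<gamma>" if "x \<in> {u..v}" "y \<in> {u..v}" for x y
  proof -
    have "\<bar>f x - f y\<bar> \<le> C * \<bar>x - y\<bar> powr \<gamma>" by (rule hol[OF that])
    also have "\<dots> \<le> C * (v - u) powr \<gamma>" using that \<gamma> C by (intro mult_left_mono powr_mono2) auto
    finally show ?thesis .
  qed
  have "\<bar>f \<xi> * (f v - f u) - ((f v)\<^sup>2 / 2 - (f u)\<^sup>2 / 2)\<bar> \<le> (C * (v - u) powr \<gamma>)\<^sup>2"
    using uv \<xi> by (intro self_RS_term_le bound) auto
  also have "\<dots> = C\<^sup>2 * (v - u) powr (2 * \<gamma> - 1) * (v - u)"
    using uv by (simp add: power_mult_distrib powr_realpow[symmetric] powr_powr powr_diff mult.commute)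
  also have "\<dots> \<le> C\<^sup>2 * \<delta> powr (2 * \<gamma> - 1) * (v - u)"
    using uv \<gamma> by (intro mult_right_mono mult_left_mono powr_mono2) auto
  finally show ?thesis .
qed

lemma RS_sum_self_deviation:
  fixes f :: "real \<Rightarrow> real"
  assumes hol: "\<And>u v. u \<in> {a..b} \<Longrightarrow> v \<in> {a..b} \<Longrightarrow> \<bar>u - v\<bar> \<le> 1 \<Longrightarrow> \<bar>f u - f v\<bar> \<le> C * \<bar>u - v\<bar> powr \<gamma>"
    and C: "0 \<le> C" and \<gamma>: "1/2 \<le> \<gamma>" and \<delta>: "\<delta> \<le> 1"
    and p: "p 0 = a" "p n = b"
      "\<forall>i<n. p i < p (Suc i) \<and> p (Suc i) - p i < \<delta> \<and> p i \<le> xi i \<and> xi i \<le> p (Suc i)"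
  shows "\<bar>RS_sum f f p xi n - ((f b)\<^sup>2 / 2 - (f a)\<^sup>2 / 2)\<bar> \<le> C\<^sup>2 * \<delta> powr (2 * \<gamma> - 1) * (b - a)"
proof -
  have mono: "\<And>j. j \<in> {..<n} \<Longrightarrow> p j \<le> p (Suc j)" using p(3) by (auto simp: less_imp_le)
  have p_in: "p i \<in> {a..b}" if "i \<le> n" for i
  proof -
    have "p 0 \<le> p i" by (rule lift_Suc_mono_le_ivl[of "{..<n}" p, OF mono]) (use that in auto)
    moreover have "p i \<le> p n" by (rule lift_Suc_mono_le_ivl[of "{..<n}" p, OF mono]) (use that in auto)
    ultimately show ?thesis using p(1,2) by simp
  qed
  have term_le: "\<bar>f (xi i) * (f (p (Suc i)) - f (p i)) - ((f (p (Suc i)))\<^sup>2 / 2 - (f (p i))\<^sup>2 / 2)\<bar>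
      \<le> C\<^sup>2 * \<delta> powr (2 * \<gamma> - 1) * (p (Suc i) - p i)" if i: "i < n" for i
  proof (rule RS_term_self_le[OF _ C \<gamma>])
    have "{p i..p (Suc i)} \<subseteq> {a..b}" using p_in[of i] p_in[of "Suc i"] i by auto
    moreover have "p (Suc i) - p i \<le> 1" using p(3) i \<delta> by auto
    ultimately show "\<bar>f x - f y\<bar> \<le> C * \<bar>x - y\<bar> powr \<gamma>" if "x \<in> {p i..p (Suc i)}" "y \<in> {p i..p (Suc i)}" for x y
      using that by (intro hol) auto
  qed (use p(3) i in auto)
  have "(\<Sum>i<n. (f (p (Suc i)))\<^sup>2 / 2 - (f (p i))\<^sup>2 / 2) = (f b)\<^sup>2 / 2 - (f a)\<^sup>2 / 2"
    using sum_lessThan_telescope[of "\<lambda>i. (f (p i))\<^sup>2 / 2" n] p by simp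
  then have "\<bar>RS_sum f f p xi n - ((f b)\<^sup>2 / 2 - (f a)\<^sup>2 / 2)\<bar>
      = \<bar>\<Sum>i<n. f (xi i) * (f (p (Suc i)) - f (p i)) - ((f (p (Suc i)))\<^sup>2 / 2 - (f (p i))\<^sup>2 / 2)\<bar>"
    unfolding RS_sum_def sum_subtractf by simp
  also have "\<dots> \<le> (\<Sum>i<n. C\<^sup>2 * \<delta> powr (2 * \<gamma> - 1) * (p (Suc i) - p i))"
    by (rule order_trans[OF sum_abs sum_mono]) (use term_le in auto)
  also have "\<dots> = C\<^sup>2 * \<delta> powr (2 * \<gamma> - 1) * (b - a)"
    using sum_lessThan_telescope[of p n] p by (simp add: sum_distrib_left[symmetric])
  finally show ?thesis .
qed

lemma has_RS_integral_self:
  fixes f :: "real \<Rightarrow> real"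
  assumes ab: "a < b" and C: "0 \<le> C" and \<gamma>: "1/2 < \<gamma>"
    and hol: "\<And>u v. u \<in> {a..b} \<Longrightarrow> v \<in> {a..b} \<Longrightarrow> \<bar>u - v\<bar> \<le> 1 \<Longrightarrow> \<bar>f u - f v\<bar> \<le> C * \<bar>u - v\<bar> powr \<gamma>"
  shows "has_RS_integral f f a b ((f b)\<^sup>2 / 2 - (f a)\<^sup>2 / 2)"
  unfolding has_RS_integral_def
proof (intro allI impI)
  fix \<epsilon> :: real assume \<epsilon>: "0 < \<epsilon>"
  define X where "X = C\<^sup>2 * (b - a)"
  have X: "0 \<le> X" unfolding X_def using ab by simp
  define q where "q = \<epsilon> / (2 * (X + 1))"
  have q: "0 < q" unfolding q_def using \<epsilon> X by (intro divide_pos_pos) auto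
  define \<delta> where "\<delta> = min 1 (q powr (1 / (2 * \<gamma> - 1)))"
  have \<delta>: "0 < \<delta>" "\<delta> \<le> 1" unfolding \<delta>_def using q by auto
  have "\<delta> powr (2 * \<gamma> - 1) \<le> (q powr (1 / (2 * \<gamma> - 1))) powr (2 * \<gamma> - 1)"
    unfolding \<delta>_def using \<delta> \<gamma> by (intro powr_mono2) (auto simp: \<delta>_def)
  also have "\<dots> = q" using \<gamma> q by (simp add: powr_powr)
  finally have \<delta>q: "\<delta> powr (2 * \<gamma> - 1) \<le> q" .
  have "C\<^sup>2 * \<delta> powr (2 * \<gamma> - 1) * (b - a) \<le> C\<^sup>2 * q * (b - a)"
    using \<delta>q ab by (intro mult_right_mono mult_left_mono) auto
  also have "\<dots> = \<epsilon> * X / (2 * (X + 1))" unfolding q_def X_def by simp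
  also have "\<dots> < \<epsilon>" using \<epsilon> X by (simp add: field_simps add_nonneg_pos)
  finally have small: "C\<^sup>2 * \<delta> powr (2 * \<gamma> - 1) * (b - a) < \<epsilon>" .
  show "\<exists>\<delta>>0. \<forall>n p xi. p 0 = a \<and> p n = b \<and>
        (\<forall>i<n. p i < p (Suc i) \<and> p (Suc i) - p i < \<delta> \<and> p i \<le> xi i \<and> xi i \<le> p (Suc i)) \<longrightarrow>
        \<bar>RS_sum f f p xi n - ((f b)\<^sup>2 / 2 - (f a)\<^sup>2 / 2)\<bar> < \<epsilon>"
  proof (intro exI[of _ \<delta>] conjI allI impI \<delta>(1))
    fix n p xi
    assume "p 0 = a \<and> p n = b \<and>
      (\<forall>i<n. p i < p (Suc i) \<and> p (Suc i) - p i < \<delta> \<and> p i \<le> xi i \<and> xi i \<le> p (Suc i))"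
    then have "\<bar>RS_sum f f p xi n - ((f b)\<^sup>2 / 2 - (f a)\<^sup>2 / 2)\<bar> \<le> C\<^sup>2 * \<delta> powr (2 * \<gamma> - 1) * (b - a)"
      using \<gamma> by (intro RS_sum_self_deviation[OF hol C _ \<delta>(2)]) auto
    then show "\<bar>RS_sum f f p xi n - ((f b)\<^sup>2 / 2 - (f a)\<^sup>2 / 2)\<bar> < \<epsilon>" using small by linarith
  qed
qed

section \<open>Asymptotics of the solution path\<close>

lemma mono_bounded_convergent_at_top:
  fixes f :: "real \<Rightarrow> real"
  assumes mono: "\<And>s t. 0 \<le> s \<Longrightarrow> s \<le> t \<Longrightarrow> f s \<le> f t" and bdd: "\<And>t. 0 \<le> t \<Longrightarrow> f t \<le> M"
  shows "\<exists>l. (f \<longlongrightarrow> l) at_top"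
proof -
  define l where "l = (SUP t\<in>{0..}. f t)"
  have bd: "bdd_above (f ` {0..})" using bdd by (auto intro!: bdd_aboveI)
  have "(f \<longlongrightarrow> l) at_top"
  proof (rule increasing_tendsto)
    show "\<forall>\<^sub>F t in at_top. f t \<le> l"
      using eventually_ge_at_top[of "0::real"]
      by eventually_elim (unfold l_def, rule cSUP_upper[OF _ bd], auto)
    fix x assume "x < l"
    then obtain t0 where t0: "t0 \<in> {0..}" "x < f t0" unfolding l_def using less_cSUP_iff[OF _ bd, of x] by auto
    show "\<forall>\<^sub>F t in at_top. x < f t"
      using eventually_ge_at_top[of t0] by eventually_elim (use t0 mono in force)
  qed
  then show ?thesis by blast
qed

lemma integral_exp_neg_le:
  fixes a t :: real assumes a: "0 < a" and t: "0 \<le> t"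
  shows "integral {0..t} (\<lambda>s. exp (- a * s)) \<le> 1 / a"
proof -
  have "((\<lambda>s. exp (- a * s)) has_integral (- exp (- a * t) / a - (- exp (- a * 0) / a))) {0..t}"
    using t a by (intro fundamental_theorem_of_calculus)
      (auto intro!: derivative_eq_intros simp: has_real_derivative_iff_has_vector_derivative[symmetric] field_simps)
  then have "integral {0..t} (\<lambda>s. exp (- a * s)) = 1 / a - exp (- a * t) / a"
    by (simp add: integral_unique)
  also have "\<dots> \<le> 1 / a" using a by simp
  finally show ?thesis .
qed

lemma integral_nonneg_bounded_convergent:
  fixes k :: "real \<Rightarrow> real"
  assumes cont: "continuous_on {0..} k" and nonneg: "\<And>s. 0 \<le> s \<Longrightarrow> 0 \<le> k s"
    and bdd: "\<And>t. 0 \<le> t \<Longrightarrow> integral {0..t} k \<le> C"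
  shows "\<exists>l. ((\<lambda>T. integral {0..T} k) \<longlongrightarrow> l) at_top"
proof (rule mono_bounded_convergent_at_top[OF _ bdd])
  fix s t :: real assume "0 \<le> s" "s \<le> t"
  show "integral {0..s} k \<le> integral {0..t} k"
  proof (rule integral_subset_le)
    show "k integrable_on {0..s}" "k integrable_on {0..t}"
      by (intro integrable_continuous_interval continuous_on_subset[OF cont]; auto)+
  qed (use \<open>s \<le> t\<close> nonneg in auto)
qed

lemma integral_exp_dominated_convergent:
  fixes g :: "real \<Rightarrow> real"
  assumes a: "0 < a" and cont: "continuous_on {0..} g"
    and bound: "\<And>s. 0 \<le> s \<Longrightarrow> \<bar>g s\<bar> \<le> c * exp (- a * s)"
  shows "\<exists>Z. ((\<lambda>T. integral {0..T} g) \<longlongrightarrow> Z) at_top"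
proof -
  define h where "h = (\<lambda>s. c * exp (- a * s))"
  have gh: "0 \<le> g s + h s" "g s \<le> h s" if "0 \<le> s" for s
    using bound[OF that] unfolding h_def by linarith+
  have c: "0 \<le> c" using bound[of 0] by simp
  have cont_h: "continuous_on {0..} h" unfolding h_def by (intro continuous_intros)
  have int: "g integrable_on {0..t}" "h integrable_on {0..t}" for t
    by (intro integrable_continuous_interval continuous_on_subset[OF cont] continuous_on_subset[OF cont_h]; auto)+
  have h_le: "integral {0..t} h \<le> c / a" if "0 \<le> t" for t
    using mult_left_mono[OF integral_exp_neg_le[OF a that] c] unfolding h_def by simp
  have "integral {0..t} (\<lambda>s. g s + h s) \<le> 2 * (c / a)" if "0 \<le> t" for t
  proof -
    have "integral {0..t} (\<lambda>s. g s + h s) \<le> integral {0..t} (\<lambda>s. 2 * h s)"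
      using gh int by (intro integral_le integrable_add integrable_cmul) auto
    then show ?thesis using h_le[OF that] by simp
  qed
  then obtain l1 where l1: "((\<lambda>T. integral {0..T} (\<lambda>s. g s + h s)) \<longlongrightarrow> l1) at_top"
    using integral_nonneg_bounded_convergent[OF continuous_on_add[OF cont cont_h]] gh by blast
  obtain l2 where l2: "((\<lambda>T. integral {0..T} h) \<longlongrightarrow> l2) at_top"
    using integral_nonneg_bounded_convergent[OF cont_h _ h_le] c by (auto simp: h_def)
  have "integral {0..T} (\<lambda>s. g s + h s) - integral {0..T} h = integral {0..T} g" for T
    using int by (simp add: integral_add)
  then have "((\<lambda>T. integral {0..T} g) \<longlongrightarrow> l1 - l2) at_top"
    using tendsto_diff[OF l1 l2] by simp
  then show ?thesis by blast
qed

lemma integral_square_asymptotic: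
  fixes X :: "real \<Rightarrow> real"
  assumes \<theta>: "0 < \<theta>" and cont: "continuous_on {0..} X"
    and lim: "((\<lambda>t. exp (-\<theta> * t) * X t) \<longlongrightarrow> L) at_top"
  shows "((\<lambda>t. integral {0..t} (\<lambda>s. (X s)\<^sup>2) / exp (2 * \<theta> * t)) \<longlongrightarrow> L\<^sup>2 / (2 * \<theta>)) at_top"
proof (rule lhospital_at_top_at_top)
  show "filterlim (\<lambda>t. exp (2 * \<theta> * t)) at_top at_top" using \<theta> by real_asymp
  show "\<forall>\<^sub>F t in at_top. 2 * \<theta> * exp (2 * \<theta> * t) \<noteq> 0" using \<theta> by simp
  show "\<forall>\<^sub>F t in at_top. ((\<lambda>t. exp (2 * \<theta> * t)) has_real_derivative 2 * \<theta> * exp (2 * \<theta> * t)) (at t)"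
    by (intro always_eventually allI) (auto intro!: derivative_eq_intros)
  have deriv: "((\<lambda>t. integral {0..t} (\<lambda>s. (X s)\<^sup>2)) has_real_derivative (X t)\<^sup>2) (at t)" if t: "0 < t" for t
  proof -
    have "continuous_on {0..t+1} (\<lambda>s. (X s)\<^sup>2)"
      by (intro continuous_intros continuous_on_subset[OF cont]) auto
    then have "((\<lambda>t. integral {0..t} (\<lambda>s. (X s)\<^sup>2)) has_real_derivative (X t)\<^sup>2) (at t within {0..t+1})"
      unfolding has_real_derivative_iff_has_vector_derivative
      by (rule integral_has_vector_derivative) (use t in auto)
    then have "((\<lambda>t. integral {0..t} (\<lambda>s. (X s)\<^sup>2)) has_real_derivative (X t)\<^sup>2) (at t within {0<..<t+1})"
      by (rule DERIV_subset) auto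
    then show ?thesis using t by (subst (asm) at_within_open) auto
  qed
  show "\<forall>\<^sub>F t in at_top. ((\<lambda>t. integral {0..t} (\<lambda>s. (X s)\<^sup>2)) has_real_derivative (X t)\<^sup>2) (at t)"
    using eventually_gt_at_top[of "0::real"] by eventually_elim (rule deriv)
  have "((\<lambda>t. (exp (-\<theta> * t) * X t)\<^sup>2 / (2 * \<theta>)) \<longlongrightarrow> L\<^sup>2 / (2 * \<theta>)) at_top"
    by (intro tendsto_intros lim) (use \<theta> in auto)
  moreover have "(exp (-\<theta> * t) * X t)\<^sup>2 / (2 * \<theta>) = (X t)\<^sup>2 / (2 * \<theta> * exp (2 * \<theta> * t))" for t
    by (simp add: power_mult_distrib exp_minus field_simps flip: exp_add exp_of_nat_mult)
  ultimately show "((\<lambda>t. (X t)\<^sup>2 / (2 * \<theta> * exp (2 * \<theta> * t))) \<longlongrightarrow> L\<^sup>2 / (2 * \<theta>)) at_top" by simp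
qed

lemma square_ratio_tendsto:
  fixes X :: "real \<Rightarrow> real"
  assumes \<theta>: "0 < \<theta>" and cont: "continuous_on {0..} X"
    and lim: "((\<lambda>t. exp (-\<theta> * t) * X t) \<longlongrightarrow> L) at_top" and L: "L \<noteq> 0"
  shows "((\<lambda>t. ((X t)\<^sup>2 / 2 - (X 0)\<^sup>2 / 2) / integral {0..t} (\<lambda>s. (X s)\<^sup>2)) \<longlongrightarrow> \<theta>) at_top"
proof -
  have "((\<lambda>t. exp (-(2 * \<theta>) * t)) \<longlongrightarrow> 0) at_top" using \<theta> by real_asymp
  then have num: "((\<lambda>t. ((exp (-\<theta> * t) * X t)\<^sup>2 - (X 0)\<^sup>2 * exp (-(2 * \<theta>) * t)) / 2) \<longlongrightarrow> (L\<^sup>2 - (X 0)\<^sup>2 * 0) / 2) at_top"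
    by (intro lim tendsto_intros) simp_all
  have "((\<lambda>t. (((exp (-\<theta> * t) * X t)\<^sup>2 - (X 0)\<^sup>2 * exp (-(2 * \<theta>) * t)) / 2)
                  / (integral {0..t} (\<lambda>s. (X s)\<^sup>2) / exp (2 * \<theta> * t)))
        \<longlongrightarrow> ((L\<^sup>2 - (X 0)\<^sup>2 * 0) / 2) / (L\<^sup>2 / (2 * \<theta>))) at_top"
    by (rule tendsto_divide[OF num integral_square_asymptotic[OF \<theta> cont lim]]) (use L \<theta> in simp)
  moreover have "((L\<^sup>2 - (X 0)\<^sup>2 * 0) / 2) / (L\<^sup>2 / (2 * \<theta>)) = \<theta>" using L \<theta> by (simp add: field_simps)
  moreover have "(((exp (-\<theta> * t) * X t)\<^sup>2 - (X 0)\<^sup>2 * exp (-(2 * \<theta>) * t)) / 2)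
                  / (integral {0..t} (\<lambda>s. (X s)\<^sup>2) / exp (2 * \<theta> * t))
      = ((X t)\<^sup>2 / 2 - (X 0)\<^sup>2 / 2) / integral {0..t} (\<lambda>s. (X s)\<^sup>2)" for t
  proof -
    have e: "exp (2 * \<theta> * t) * exp (-(2 * \<theta>) * t) = 1" by (simp flip: exp_add)
    have x: "(exp (-\<theta> * t) * X t)\<^sup>2 * exp (2 * \<theta> * t) = (X t)\<^sup>2"
      by (simp add: power_mult_distrib flip: exp_add exp_of_nat_mult)
    show ?thesis using e x by (simp add: field_simps)
  qed
  ultimately show ?thesis by simp
qed

lemma integral_increment_le:
  fixes X :: "real \<Rightarrow> real"
  assumes cont: "continuous_on {0..u} X" and vu: "0 \<le> v" "v \<le> u" and M: "\<And>x. x \<in> {v..u} \<Longrightarrow> \<bar>X x\<bar> \<le> M"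
  shows "\<bar>integral {0..u} X - integral {0..v} X\<bar> \<le> M * (u - v)"
proof -
  have "integral {0..v} X + integral {v..u} X = integral {0..u} X"
    by (rule Henstock_Kurzweil_Integration.integral_combine)
       (use vu cont in \<open>auto intro: integrable_continuous_interval\<close>)
  then have "\<bar>integral {0..u} X - integral {0..v} X\<bar> = norm (integral {v..u} X)" by simp
  also have "\<dots> \<le> integral {v..u} (\<lambda>_. M)"
    by (rule integral_norm_bound_integral)
       (use vu M in \<open>auto intro!: integrable_continuous_interval continuous_on_subset[OF cont]\<close>)
  also have "\<dots> = M * (u - v)" using vu by simp
  finally show ?thesis .
qed

context
  fixes X B :: "real \<Rightarrow> real" and \<theta> :: real
  assumes \<theta>: "0 < \<theta>" and cont_X: "continuous_on {0..} X"
    and ode: "\<And>t. 0 \<le> t \<Longrightarrow> X t = \<theta> * integral {0..t} X + B t"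
begin

lemma ode_variation_of_constants:
  assumes t: "0 \<le> t"
  shows "exp (-\<theta> * t) * integral {0..t} X = integral {0..t} (\<lambda>s. exp (-\<theta> * s) * B s)"
proof -
  have "((\<lambda>s. exp (-\<theta> * s) * B s) has_integral
      (exp (-\<theta> * t) * integral {0..t} X - exp (-\<theta> * 0) * integral {0..0} X)) {0..t}"
  proof (rule fundamental_theorem_of_calculus[OF t])
    fix x assume x: "x \<in> {0..t}"
    have "((\<lambda>t. integral {0..t} X) has_real_derivative X x) (at x within {0..t})"
      unfolding has_real_derivative_iff_has_vector_derivative
      by (rule integral_has_vector_derivative[OF continuous_on_subset[OF cont_X] x]) auto
    then have "((\<lambda>s. exp (-\<theta> * s) * integral {0..s} X) has_real_derivative
        (exp (-\<theta> * x) * (-\<theta>) * integral {0..x} X + exp (-\<theta> * x) * X x)) (at x within {0..t})"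
      by (auto intro!: derivative_eq_intros)
    moreover have "exp (-\<theta> * x) * (-\<theta>) * integral {0..x} X + exp (-\<theta> * x) * X x = exp (-\<theta> * x) * B x"
      using ode[of x] x by (simp add: algebra_simps)
    ultimately show "((\<lambda>s. exp (-\<theta> * s) * integral {0..s} X) has_vector_derivative exp (-\<theta> * x) * B x)
        (at x within {0..t})"
      by (simp add: has_real_derivative_iff_has_vector_derivative)
  qed
  then show ?thesis by (simp add: integral_unique)
qed

lemma ode_scaled_tendsto:
  assumes Z: "((\<lambda>T. integral {0..T} (\<lambda>s. exp (-\<theta> * s) * B s)) \<longlongrightarrow> Z) at_top"
    and B_decay: "((\<lambda>t. exp (-\<theta> * t) * B t) \<longlongrightarrow> 0) at_top"
  shows "((\<lambda>t. exp (-\<theta> * t) * X t) \<longlongrightarrow> \<theta> * Z) at_top"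
proof -
  have "((\<lambda>t. \<theta> * integral {0..t} (\<lambda>s. exp (-\<theta> * s) * B s) + exp (-\<theta> * t) * B t) \<longlongrightarrow> \<theta> * Z + 0) at_top"
    by (intro tendsto_intros Z B_decay)
  moreover have "\<forall>\<^sub>F t in at_top.
      \<theta> * integral {0..t} (\<lambda>s. exp (-\<theta> * s) * B s) + exp (-\<theta> * t) * B t = exp (-\<theta> * t) * X t"
    using eventually_ge_at_top[of "0::real"]
  proof eventually_elim
    case (elim t)
    show ?case
      unfolding ode_variation_of_constants[OF elim, symmetric] using ode[OF elim] by (simp add: algebra_simps)
  qed
  ultimately show ?thesis by (simp add: tendsto_cong)
qed

lemma ode_solution_holder:
  assumes holder: "holder_on_unit_intervals K \<gamma> B" and K: "0 \<le> K" and \<gamma>: "0 < \<gamma>" "\<gamma> \<le> 1"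
    and T: "0 \<le> T"
  obtains C where "0 \<le> C"
    "\<And>u v. u \<in> {0..T} \<Longrightarrow> v \<in> {0..T} \<Longrightarrow> \<bar>u - v\<bar> \<le> 1 \<Longrightarrow> \<bar>X u - X v\<bar> \<le> C * \<bar>u - v\<bar> powr \<gamma>"
proof -
  have "compact (X ` {0..T})" by (intro compact_continuous_image continuous_on_subset[OF cont_X]) auto
  then obtain M where M: "\<And>x. x \<in> {0..T} \<Longrightarrow> \<bar>X x\<bar> \<le> M"
    using compact_imp_bounded bounded_real by (metis image_eqI)
  have M0: "0 \<le> M" using M[of 0] T by auto
  have integral_diff: "\<bar>integral {0..u} X - integral {0..v} X\<bar> \<le> M * (u - v)"
    if "0 \<le> v" "v \<le> u" "u \<le> T" for u v
    using that M by (intro integral_increment_le continuous_on_subset[OF cont_X]) auto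
  define C where "C = \<theta> * M + 2 * K * (T + 2)"
  have C0: "0 \<le> C" unfolding C_def using \<theta> M0 K T by simp
  have ordered: "\<bar>X u - X v\<bar> \<le> C * (u - v) powr \<gamma>" if uv: "0 \<le> v" "v \<le> u" "u \<le> T" "u - v \<le> 1" for u v
  proof -
    have "\<bar>X u - X v\<bar> = \<bar>\<theta> * (integral {0..u} X - integral {0..v} X) + (B u - B v)\<bar>"
      using ode[of u] ode[of v] uv by (simp add: algebra_simps)
    also have "\<dots> \<le> \<theta> * \<bar>integral {0..u} X - integral {0..v} X\<bar> + \<bar>B u - B v\<bar>"
      using \<theta> by (simp add: abs_mult abs_triangle_ineq order.trans[OF abs_triangle_ineq])
    also have "\<dots> \<le> \<theta> * (M * (u - v)) + 2 * K * (T + 2) * \<bar>u - v\<bar> powr \<gamma>"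
      using integral_diff[OF uv(1-3)] holder_on_unit_intervals_local[OF holder K \<gamma>(1), of v T u] uv \<theta>
      by (intro add_mono mult_left_mono) auto
    also have "\<dots> \<le> \<theta> * (M * (u - v) powr \<gamma>) + 2 * K * (T + 2) * (u - v) powr \<gamma>"
      using powr_mono'[of \<gamma> 1 "u - v"] uv \<gamma> \<theta> M0 by (cases "u = v") (auto simp: mult_left_mono)
    also have "\<dots> = C * (u - v) powr \<gamma>" unfolding C_def by (simp add: algebra_simps)
    finally show ?thesis .
  qed
  show thesis
  proof (rule that[OF C0])
    fix u v assume "u \<in> {0..T}" "v \<in> {0..T}" "\<bar>u - v\<bar> \<le> 1"
    then show "\<bar>X u - X v\<bar> \<le> C * \<bar>u - v\<bar> powr \<gamma>"
      using ordered[of v u] ordered[of u v] by (cases "v \<le> u") (auto simp: abs_minus_commute)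
  qed
qed

end

lemma holder_on_unit_intervals_exp_weighted_bound:
  assumes holder: "holder_on_unit_intervals K \<gamma> f" and K: "0 \<le> K" and \<gamma>: "0 < \<gamma>"
    and \<theta>: "0 < \<theta>" and f0: "f 0 = 0"
  obtains c where "\<And>t. 0 \<le> t \<Longrightarrow> \<bar>exp (-\<theta> * t) * f t\<bar> \<le> c * exp (-(\<theta>/2) * t)"
proof
  fix t :: real assume t: "0 \<le> t"
  define c where "c = K * (4 / (\<theta>/2)\<^sup>2 * exp (\<theta>/2))"
  have "\<bar>f t\<bar> \<le> c * exp ((\<theta>/2) * t)"
    using holder_on_unit_intervals_exp_bound[OF holder K \<gamma> _ t, of "\<theta>/2"] \<theta> f0 by (simp add: c_def)
  then have "\<bar>exp (-\<theta> * t) * f t\<bar> \<le> exp (-\<theta> * t) * (c * exp ((\<theta>/2) * t))"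
    by (simp add: abs_mult mult_left_mono)
  also have "\<dots> = c * exp (-(\<theta>/2) * t)" by (simp add: algebra_simps flip: exp_add)
  finally show "\<bar>exp (-\<theta> * t) * f t\<bar> \<le> c * exp (-(\<theta>/2) * t)" .
qed

lemma exp_neg_diff_le:
  fixes \<theta> u s :: real assumes \<theta>: "0 < \<theta>" and us: "u \<le> s" "s \<le> u + 1"
  shows "\<bar>exp (-\<theta> * s) - exp (-\<theta> * u)\<bar> \<le> exp \<theta> * \<theta> * (s - u) * exp (-\<theta> * s)"
proof -
  have "exp (-\<theta> * s) \<le> exp (-\<theta> * u)" using \<theta> us by simp
  then have "\<bar>exp (-\<theta> * s) - exp (-\<theta> * u)\<bar> = exp (-\<theta> * s) * (exp (\<theta> * (s - u)) - 1)"
    by (simp add: right_diff_distrib algebra_simps flip: exp_add)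
  also have "exp (\<theta> * (s - u)) - 1 \<le> exp (\<theta> * (s - u)) * (\<theta> * (s - u))"
  proof -
    have "1 - \<theta> * (s - u) \<le> exp (-(\<theta> * (s - u)))" using exp_ge_add_one_self[of "-(\<theta> * (s - u))"] by linarith
    then have "exp (\<theta> * (s - u)) * (1 - \<theta> * (s - u)) \<le> exp (\<theta> * (s - u)) * exp (-(\<theta> * (s - u)))"
      by (intro mult_left_mono) auto
    then show ?thesis by (simp add: algebra_simps flip: exp_add)
  qed
  then have "exp (-\<theta> * s) * (exp (\<theta> * (s - u)) - 1) \<le> exp (-\<theta> * s) * (exp (\<theta> * (s - u)) * (\<theta> * (s - u)))"
    by (intro mult_left_mono) auto
  also have "\<dots> \<le> exp (-\<theta> * s) * (exp \<theta> * (\<theta> * (s - u)))"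
    using \<theta> us by (intro mult_left_mono mult_right_mono) auto
  finally show ?thesis by (simp add: mult_ac)
qed

lemma holder_on_unit_intervals_exp_weighted_diff:
  fixes B :: "real \<Rightarrow> real"
  assumes holder: "holder_on_unit_intervals K \<gamma> B" and K: "0 \<le> K" and \<gamma>: "0 < \<gamma>" "\<gamma> \<le> 1"
    and \<theta>: "0 < \<theta>" and us: "0 \<le> u" "u \<le> s" "s \<le> u + 1"
  shows "\<bar>exp (-\<theta> * s) * B s - exp (-\<theta> * u) * B u\<bar>
    \<le> (2 * K + exp \<theta> * \<theta> * (\<bar>B 0\<bar> + K)) * (s + 2)\<^sup>2 * exp (-\<theta> * s) * (s - u) powr \<gamma>"
proof -
  define p where "p = (s - u) powr \<gamma>"
  have "(s - u) powr 1 \<le> (s - u) powr \<gamma>" using powr_mono'[of \<gamma> 1 "s - u"] us \<gamma> by auto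
  then have p: "0 \<le> p" "s - u \<le> p" unfolding p_def using us by auto
  have "(s + 2) * 1 \<le> (s + 2) * (s + 2)" using us by (intro mult_left_mono) auto
  then have "s + 2 \<le> (s + 2)\<^sup>2" by (simp add: power2_eq_square)
  then have s2: "1 \<le> (s + 2)\<^sup>2" "s + 2 \<le> (s + 2)\<^sup>2" using us by linarith+
  have "\<bar>B s - B u\<bar> \<le> 2 * K * (s + 2) * p"
    using holder_on_unit_intervals_local[OF holder K \<gamma>(1), of u s s] us by (auto simp: p_def)
  also have "\<dots> \<le> 2 * K * (s + 2)\<^sup>2 * p" using s2 K p by (intro mult_right_mono mult_left_mono) auto
  finally have B_diff: "\<bar>B s - B u\<bar> \<le> 2 * K * (s + 2)\<^sup>2 * p" .
  have "\<bar>B u\<bar> \<le> \<bar>B 0\<bar> + K * (u + 1)\<^sup>2" by (rule holder_on_unit_intervals_growth[OF holder K \<gamma>(1) us(1)])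
  also have "\<dots> \<le> \<bar>B 0\<bar> * (s + 2)\<^sup>2 + K * (s + 2)\<^sup>2"
    using us K s2 by (intro add_mono mult_left_mono power_mono) (auto simp: mult_le_cancel_left1)
  finally have B_u: "\<bar>B u\<bar> \<le> (\<bar>B 0\<bar> + K) * (s + 2)\<^sup>2" by (simp add: distrib_right)
  have exp_diff: "\<bar>exp (-\<theta> * s) - exp (-\<theta> * u)\<bar> \<le> exp \<theta> * \<theta> * p * exp (-\<theta> * s)"
    using exp_neg_diff_le[OF \<theta> us(2,3)] p \<theta> by (smt (verit) exp_gt_zero mult_pos_pos mult_right_mono mult_left_mono)
  have "\<bar>exp (-\<theta> * s) * B s - exp (-\<theta> * u) * B u\<bar>
      = \<bar>exp (-\<theta> * s) * (B s - B u) + (exp (-\<theta> * s) - exp (-\<theta> * u)) * B u\<bar>" by (simp add: algebra_simps)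
  also have "\<dots> \<le> exp (-\<theta> * s) * \<bar>B s - B u\<bar> + \<bar>exp (-\<theta> * s) - exp (-\<theta> * u)\<bar> * \<bar>B u\<bar>"
    by (rule order.trans[OF abs_triangle_ineq]) (simp add: abs_mult)
  also have "\<dots> \<le> exp (-\<theta> * s) * (2 * K * (s + 2)\<^sup>2 * p) + (exp \<theta> * \<theta> * p * exp (-\<theta> * s)) * ((\<bar>B 0\<bar> + K) * (s + 2)\<^sup>2)"
    using B_diff B_u exp_diff by (intro add_mono mult_left_mono mult_mono) auto
  also have "\<dots> = (2 * K + exp \<theta> * \<theta> * (\<bar>B 0\<bar> + K)) * (s + 2)\<^sup>2 * exp (-\<theta> * s) * p"
    by (simp add: algebra_simps)
  finally show ?thesis unfolding p_def .
qed

lemma exp_weighted_modulus: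
  fixes B :: "real \<Rightarrow> real"
  assumes holder: "holder_on_unit_intervals K \<gamma> B" and K: "0 \<le> K" and \<gamma>: "0 < \<gamma>" "\<gamma> \<le> 1"
    and \<theta>: "0 < \<theta>"
  obtains M where "0 \<le> M" "\<And>u s. 0 \<le> u \<Longrightarrow> u \<le> s \<Longrightarrow> s \<le> u + 1 \<Longrightarrow>
    \<bar>exp (-\<theta> * s) * B s - exp (-\<theta> * u) * B u\<bar> \<le> M * exp (-(\<theta>/2) * s) * (s - u) powr \<gamma>"
proof
  define A where "A = 2 * K + exp \<theta> * \<theta> * (\<bar>B 0\<bar> + K)"
  have A: "0 \<le> A" unfolding A_def using K \<theta> by simp
  show "0 \<le> A * (4 / (\<theta>/2)\<^sup>2 * exp \<theta>)" using A by simp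
  fix u s :: real assume us: "0 \<le> u" "u \<le> s" "s \<le> u + 1"
  have "exp (-\<theta> * s) * (s + 2)\<^sup>2 \<le> exp (-\<theta> * s) * (4 / (\<theta>/2)\<^sup>2 * exp ((\<theta>/2) * (s + 2)))"
    using power2_le_exp[of "\<theta>/2" "s + 2"] us \<theta> by (intro mult_left_mono) auto
  also have "\<dots> = 4 / (\<theta>/2)\<^sup>2 * exp \<theta> * exp (-(\<theta>/2) * s)"
    by (simp add: field_simps flip: exp_add)
  finally have weight: "exp (-\<theta> * s) * (s + 2)\<^sup>2 \<le> 4 / (\<theta>/2)\<^sup>2 * exp \<theta> * exp (-(\<theta>/2) * s)" .
  have "\<bar>exp (-\<theta> * s) * B s - exp (-\<theta> * u) * B u\<bar> \<le> A * (exp (-\<theta> * s) * (s + 2)\<^sup>2) * (s - u) powr \<gamma>"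
    using holder_on_unit_intervals_exp_weighted_diff[OF holder K \<gamma> \<theta> us] by (simp add: A_def mult_ac)
  also have "\<dots> \<le> A * (4 / (\<theta>/2)\<^sup>2 * exp \<theta> * exp (-(\<theta>/2) * s)) * (s - u) powr \<gamma>"
    using weight A by (intro mult_right_mono mult_left_mono) auto
  finally show "\<bar>exp (-\<theta> * s) * B s - exp (-\<theta> * u) * B u\<bar> \<le> A * (4 / (\<theta>/2)\<^sup>2 * exp \<theta>) * exp (-(\<theta>/2) * s) * (s - u) powr \<gamma>"
    by (simp add: mult_ac)
qed

lemma sum_integral_uniform_pieces:
  fixes f :: "real \<Rightarrow> real"
  assumes cont: "continuous_on {0..} f" and h: "0 \<le> h"
  shows "(\<Sum>i<n. integral {real i * h..real i * h + h} f) = integral {0..real n * h} f"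
proof (induction n)
  case (Suc n)
  have "continuous_on {0..real n * h + h} f" using cont by (rule continuous_on_subset) auto
  then have "integral {0..real n * h} f + integral {real n * h..real n * h + h} f = integral {0..real n * h + h} f"
    by (intro Henstock_Kurzweil_Integration.integral_combine)
       (use h in \<open>auto intro: integrable_continuous_interval\<close>)
  then show ?case using Suc.IH by (simp add: distrib_right add.commute)
qed simp

lemma left_endpoint_integral_error:
  fixes g e :: "real \<Rightarrow> real"
  assumes cont: "continuous_on {u..u+h} g" "continuous_on {u..u+h} e" and h: "0 \<le> h"
    and modulus: "\<And>s. s \<in> {u..u+h} \<Longrightarrow> \<bar>g s - g u\<bar> \<le> c * e s"
  shows "\<bar>h * g u - integral {u..u+h} g\<bar> \<le> c * integral {u..u+h} e"
proof -
  have int_g: "g integrable_on {u..u+h}" and int_e: "e integrable_on {u..u+h}"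
    using cont by (auto intro: integrable_continuous_interval)
  have "integral {u..u+h} (\<lambda>s. g u - g s) = integral {u..u+h} (\<lambda>s. g u) - integral {u..u+h} g"
    by (rule integral_diff) (use int_g in auto)
  then have "\<bar>h * g u - integral {u..u+h} g\<bar> = norm (integral {u..u+h} (\<lambda>s. g u - g s))"
    using h by simp
  also have "\<dots> \<le> integral {u..u+h} (\<lambda>s. c * e s)"
  proof (rule integral_norm_bound_integral)
    show "(\<lambda>s. g u - g s) integrable_on {u..u+h}" using int_g by (intro integrable_diff) auto
    show "(\<lambda>s. c * e s) integrable_on {u..u+h}" using int_e by (rule integrable_on_mult_right)
  qed (use modulus in \<open>auto simp: abs_minus_commute\<close>)
  also have "\<dots> = c * integral {u..u+h} e" by simp
  finally show ?thesis .
qed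

lemma riemann_sum_error_le:
  fixes g :: "real \<Rightarrow> real"
  assumes cont: "continuous_on {0..} g" and a: "0 < a" and \<gamma>: "0 < \<gamma>" and M: "0 \<le> M"
    and modulus: "\<And>u s. 0 \<le> u \<Longrightarrow> u \<le> s \<Longrightarrow> s \<le> u + 1 \<Longrightarrow> \<bar>g s - g u\<bar> \<le> M * exp (- a * s) * (s - u) powr \<gamma>"
    and h: "0 < h" "h \<le> 1"
  shows "\<bar>(\<Sum>i<n. h * g (real i * h)) - integral {0..real n * h} g\<bar> \<le> M * h powr \<gamma> / a"
proof -
  define e where "e = (\<lambda>s::real. exp (- a * s))"
  have cont_e: "continuous_on {0..} e" unfolding e_def by (intro continuous_intros)
  have piece: "\<bar>h * g u - integral {u..u+h} g\<bar> \<le> M * h powr \<gamma> * integral {u..u+h} e" if u: "0 \<le> u" for u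
  proof (rule left_endpoint_integral_error)
    show "continuous_on {u..u+h} g" "continuous_on {u..u+h} e"
      using u by (auto intro: continuous_on_subset[OF cont] continuous_on_subset[OF cont_e])
    fix s assume s: "s \<in> {u..u+h}"
    have "\<bar>g s - g u\<bar> \<le> M * exp (- a * s) * (s - u) powr \<gamma>" using modulus[of u s] u s h by auto
    also have "\<dots> \<le> M * exp (- a * s) * h powr \<gamma>"
      using s \<gamma> M by (intro mult_left_mono powr_mono2) auto
    finally show "\<bar>g s - g u\<bar> \<le> M * h powr \<gamma> * e s" by (simp add: e_def mult_ac)
  qed (use h in auto)
  have "\<bar>(\<Sum>i<n. h * g (real i * h)) - integral {0..real n * h} g\<bar>
      = \<bar>\<Sum>i<n. h * g (real i * h) - integral {real i * h..real i * h + h} g\<bar>"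
    unfolding sum_subtractf sum_integral_uniform_pieces[OF cont less_imp_le[OF h(1)]] ..
  also have "\<dots> \<le> (\<Sum>i<n. M * h powr \<gamma> * integral {real i * h..real i * h + h} e)"
    by (rule order_trans[OF sum_abs sum_mono]) (use piece h in simp)
  also have "\<dots> = M * h powr \<gamma> * integral {0..real n * h} e"
    by (simp add: sum_distrib_left[symmetric] sum_integral_uniform_pieces[OF cont_e less_imp_le[OF h(1)]])
  also have "\<dots> \<le> M * h powr \<gamma> * (1 / a)"
    using integral_exp_neg_le[OF a, of "real n * h"] M h unfolding e_def by (intro mult_left_mono) auto
  finally show ?thesis by simp
qed

lemma riemann_sums_tendsto_improper_integral:
  fixes g :: "real \<Rightarrow> real"
  assumes cont: "continuous_on {0..} g" and a: "0 < a" and \<gamma>: "0 < \<gamma>" and M: "0 \<le> M"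
    and modulus: "\<And>u s. 0 \<le> u \<Longrightarrow> u \<le> s \<Longrightarrow> s \<le> u + 1 \<Longrightarrow> \<bar>g s - g u\<bar> \<le> M * exp (- a * s) * (s - u) powr \<gamma>"
    and Z: "((\<lambda>T. integral {0..T} g) \<longlongrightarrow> Z) at_top"
  shows "(\<lambda>N::nat. \<Sum>i<N*N. g (real i / real N) / real N) \<longlonglongrightarrow> Z"
proof -
  define S where "S = (\<lambda>N::nat. \<Sum>i<N*N. g (real i / real N) / real N)"
  have err: "\<bar>S N - integral {0..real N} g\<bar> \<le> M * (1 / real N) powr \<gamma> / a" if N: "1 \<le> N" for N
  proof -
    have "S N = (\<Sum>i<N*N. (1 / real N) * g (real i * (1 / real N)))" unfolding S_def by simp
    moreover have "real (N * N) * (1 / real N) = real N" using N by simp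
    ultimately show ?thesis
      using riemann_sum_error_le[OF cont a \<gamma> M modulus, of "1 / real N" "N * N"] N by simp
  qed
  have "(\<lambda>N. S N - integral {0..real N} g) \<longlonglongrightarrow> 0"
  proof (rule Lim_null_comparison)
    show "\<forall>\<^sub>F N in sequentially. norm (S N - integral {0..real N} g) \<le> M * (1 / real N) powr \<gamma> / a"
      using eventually_ge_at_top[of "1::nat"] by eventually_elim (use err in auto)
    have "(\<lambda>N::nat. (1 / real N) powr \<gamma>) \<longlonglongrightarrow> 0" using \<gamma> by real_asymp
    then show "(\<lambda>N::nat. M * (1 / real N) powr \<gamma> / a) \<longlonglongrightarrow> 0"
      using tendsto_mult_right_zero[of _ sequentially "M / a"] by simp
  qed
  moreover have "(\<lambda>N::nat. integral {0..real N} g) \<longlonglongrightarrow> Z"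
    by (rule filterlim_compose[OF Z filterlim_real_sequentially])
  ultimately have "(\<lambda>N. (S N - integral {0..real N} g) + integral {0..real N} g) \<longlonglongrightarrow> 0 + Z"
    by (rule tendsto_add)
  then show ?thesis unfolding S_def by simp
qed

lemma least_squares_ratio_tendsto:
  fixes B X :: "real \<Rightarrow> real"
  assumes \<theta>: "0 < \<theta>" and cont_X: "continuous_on {0..} X"
    and ode: "\<And>t. 0 \<le> t \<Longrightarrow> X t = \<theta> * integral {0..t} X + B t"
    and B0: "B 0 = 0" and holder: "holder_on_unit_intervals K \<gamma> B" and K: "0 \<le> K"
    and \<gamma>: "1/2 < \<gamma>" "\<gamma> \<le> 1"
    and Z: "((\<lambda>T. integral {0..T} (\<lambda>s. exp (-\<theta> * s) * B s)) \<longlongrightarrow> Z) at_top" and Z0: "Z \<noteq> 0"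
  shows "((\<lambda>t. RS_integral X X 0 t / integral {0..t} (\<lambda>s. (X s)\<^sup>2)) \<longlongrightarrow> \<theta>) at_top"
proof -
  have \<gamma>0: "0 < \<gamma>" using \<gamma> by simp
  obtain c where c: "\<And>t. 0 \<le> t \<Longrightarrow> \<bar>exp (-\<theta> * t) * B t\<bar> \<le> c * exp (-(\<theta>/2) * t)"
    using holder_on_unit_intervals_exp_weighted_bound[OF holder K \<gamma>0 \<theta> B0] by metis
  have decay: "((\<lambda>t. exp (-\<theta> * t) * B t) \<longlongrightarrow> 0) at_top"
  proof (rule Lim_null_comparison)
    show "\<forall>\<^sub>F t in at_top. norm (exp (-\<theta> * t) * B t) \<le> c * exp (-(\<theta>/2) * t)"
      using eventually_ge_at_top[of "0::real"] by eventually_elim (use c in auto)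
    show "((\<lambda>t. c * exp (-(\<theta>/2) * t)) \<longlongrightarrow> 0) at_top" using \<theta> by real_asymp
  qed
  have "((\<lambda>t. exp (-\<theta> * t) * X t) \<longlongrightarrow> \<theta> * Z) at_top"
    using ode_scaled_tendsto[OF \<theta> cont_X ode Z decay] .
  then have lim: "((\<lambda>t. ((X t)\<^sup>2 / 2 - (X 0)\<^sup>2 / 2) / integral {0..t} (\<lambda>s. (X s)\<^sup>2)) \<longlongrightarrow> \<theta>) at_top"
    by (rule square_ratio_tendsto[OF \<theta> cont_X]) (use \<theta> Z0 in simp)
  have "\<forall>\<^sub>F t in at_top. RS_integral X X 0 t = (X t)\<^sup>2 / 2 - (X 0)\<^sup>2 / 2"
    using eventually_gt_at_top[of "0::real"]
  proof eventually_elim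
    case (elim t)
    have "has_RS_integral X X 0 t ((X t)\<^sup>2 / 2 - (X 0)\<^sup>2 / 2)"
    proof (rule ode_solution_holder[OF \<theta> cont_X ode holder K \<gamma>0 \<gamma>(2) less_imp_le[OF elim]])
      fix C assume "0 \<le> C" and "\<And>u v. u \<in> {0..t} \<Longrightarrow> v \<in> {0..t} \<Longrightarrow> \<bar>u - v\<bar> \<le> 1 \<Longrightarrow>
        \<bar>X u - X v\<bar> \<le> C * \<bar>u - v\<bar> powr \<gamma>"
      then show ?thesis by (rule has_RS_integral_self[OF elim _ \<gamma>(1)])
    qed
    then show ?case using elim by (rule RS_integral_eqI)
  qed
  then have "\<forall>\<^sub>F t in at_top. ((X t)\<^sup>2 / 2 - (X 0)\<^sup>2 / 2) / integral {0..t} (\<lambda>s. (X s)\<^sup>2)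
      = RS_integral X X 0 t / integral {0..t} (\<lambda>s. (X s)\<^sup>2)"
    by eventually_elim simp
  from tendsto_cong[OF this] lim show ?thesis by simp
qed

section \<open>Non-degeneracy of the limit\<close>

lemma powr_add_le_add_powr:
  fixes a b p :: real assumes a: "0 \<le> a" and b: "0 \<le> b" and p: "1 \<le> p"
  shows "a powr p + b powr p \<le> (a + b) powr p"
proof (cases "a + b = 0")
  case True
  then have "a = 0" "b = 0" using a b by auto
  then show ?thesis by simp
next
  case False
  then have ab: "0 < a + b" using a b by simp
  define x y where "x = a / (a + b)" and "y = b / (a + b)"
  have x: "0 \<le> x" "x \<le> 1" and y: "0 \<le> y" "y \<le> 1" using a b ab by (auto simp: x_def y_def)
  have "a powr p = (a + b) powr p * x powr p" "b powr p = (a + b) powr p * y powr p"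
    using ab a b by (simp_all add: x_def y_def powr_divide)
  moreover have "x powr p \<le> x" "y powr p \<le> y"
    using powr_mono'[of 1 p x] powr_mono'[of 1 p y] x y p by (cases "x = 0"; cases "y = 0"; simp)+
  ultimately have "a powr p + b powr p \<le> (a + b) powr p * x + (a + b) powr p * y"
    by (metis add_mono mult_left_mono powr_ge_zero)
  also have "\<dots> = (a + b) powr p" using ab by (simp add: x_def y_def add_divide_distrib[symmetric] flip: distrib_left)
  finally show ?thesis .
qed

lemma fbm_cov_ge_min:
  assumes H: "1/2 \<le> H" and s: "0 \<le> s" and u: "0 \<le> u"
  shows "min s u powr (2*H) \<le> fbm_cov H s u"
proof -
  have ordered: "a powr (2*H) \<le> fbm_cov H a b" if "0 \<le> a" "a \<le> b" for a b
  proof -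
    have "a powr (2*H) + (b - a) powr (2*H) \<le> (a + (b - a)) powr (2*H)"
      using that H by (intro powr_add_le_add_powr) auto
    then show ?thesis using that by (simp add: fbm_cov_def abs_minus_commute)
  qed
  show ?thesis
    using ordered[of s u] ordered[of u s] s u by (cases "s \<le> u") (auto simp: fbm_cov_def abs_minus_commute)
qed

lemma fbm_exp_riemann_variance_ge:
  fixes \<theta> :: real and N :: nat
  assumes H: "1/2 \<le> H" and \<theta>: "0 < \<theta>" and N: "2 \<le> N"
  defines "c \<equiv> (\<lambda>i::nat. exp (-\<theta> * (real i / real N)) / real N)"
    and "ts \<equiv> (\<lambda>i::nat. real i / real N)"
  shows "exp (-4 * \<theta>) \<le> (\<Sum>i<N*N. \<Sum>j<N*N. c i * c j * fbm_cov H (ts i) (ts j))"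
proof -
  have cov_nonneg: "0 \<le> fbm_cov H (ts i) (ts j)" for i j
    using fbm_cov_ge_min[OF H, of "ts i" "ts j"] by (simp add: ts_def) (meson order.trans powr_ge_zero)
  have nonneg: "0 \<le> c i * c j * fbm_cov H (ts i) (ts j)" for i j using cov_nonneg by (simp add: c_def)
  (* Only the indices with times in [1, 2) are kept: there every covariance is at least 1. *)
  define I where "I = {N..<2*N}"
  have NN: "2 * N \<le> N * N" using mult_le_mono1[OF N] .
  have IN: "I \<subseteq> {..<N*N}" unfolding I_def by (auto intro: less_le_trans[OF _ NN])
  have Nr: "(2::real) \<le> real N" using N by simp
  have c_I: "exp (-2 * \<theta>) / real N \<le> c i" if "i \<in> I" for i
  proof -
    have "real i < 2 * real N" using that unfolding I_def by auto
    then have "real i / real N \<le> 2" using Nr by (simp add: divide_le_eq)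
    then have "\<theta> * (real i / real N) \<le> \<theta> * 2" using \<theta> by (intro mult_left_mono) auto
    then have "exp (-2 * \<theta>) \<le> exp (-\<theta> * (real i / real N))" by simp
    then show ?thesis unfolding c_def using Nr by (intro divide_right_mono) auto
  qed
  have cov_I: "1 \<le> fbm_cov H (ts i) (ts j)" if "i \<in> I" "j \<in> I" for i j
  proof -
    have "1 \<le> ts i" "1 \<le> ts j" using that Nr unfolding I_def ts_def by (auto simp: le_divide_eq)
    then have "1 \<le> min (ts i) (ts j) powr (2*H)" using H by (simp add: ge_one_powr_ge_zero)
    then show ?thesis using fbm_cov_ge_min[OF H, of "ts i" "ts j"] by (simp add: ts_def)
  qed
  have "(\<Sum>i\<in>I. \<Sum>j\<in>I. (exp (-2 * \<theta>) / real N) * (exp (-2 * \<theta>) / real N) * 1)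
       \<le> (\<Sum>i\<in>I. \<Sum>j\<in>I. c i * c j * fbm_cov H (ts i) (ts j))"
    using Nr by (intro sum_mono mult_mono c_I cov_I) (auto simp: c_def)
  also have "\<dots> \<le> (\<Sum>i\<in>I. \<Sum>j<N*N. c i * c j * fbm_cov H (ts i) (ts j))"
    by (intro sum_mono sum_mono2 IN nonneg) auto
  also have "\<dots> \<le> (\<Sum>i<N*N. \<Sum>j<N*N. c i * c j * fbm_cov H (ts i) (ts j))"
    by (intro sum_mono2 IN sum_nonneg nonneg) auto
  finally show ?thesis using Nr by (simp add: I_def power2_eq_square flip: exp_add)
qed

lemma (in prob_space) AE_not_LIMSEQ_zero_if_small_ball:
  assumes [measurable]: "\<And>N. Y N \<in> borel_measurable M"
    and small: "\<And>N \<epsilon>. start \<le> N \<Longrightarrow> 0 < \<epsilon> \<Longrightarrow> prob {\<omega>\<in>space M. \<bar>Y N \<omega>\<bar> < \<epsilon>} \<le> c * \<epsilon>"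
  shows "AE \<omega> in M. \<not> (\<lambda>N. Y N \<omega>) \<longlonglongrightarrow> 0"
proof -
  define A where "A = (\<lambda>\<epsilon> K. {\<omega>\<in>space M. \<forall>N\<ge>K + start. \<bar>Y N \<omega>\<bar> < \<epsilon>})"
  have [measurable]: "A \<epsilon> K \<in> sets M" for \<epsilon> K unfolding A_def by measurable
  have A_le: "prob (\<Union>K. A \<epsilon> K) \<le> c * \<epsilon>" if \<epsilon>: "0 < \<epsilon>" for \<epsilon>
  proof -
    have "(\<lambda>K. prob (A \<epsilon> K)) \<longlonglongrightarrow> prob (\<Union>K. A \<epsilon> K)"
      by (rule finite_Lim_measure_incseq) (auto simp: A_def incseq_def)
    moreover have "prob (A \<epsilon> K) \<le> c * \<epsilon>" for K
    proof -
      have "prob (A \<epsilon> K) \<le> prob {\<omega>\<in>space M. \<bar>Y (K + start) \<omega>\<bar> < \<epsilon>}"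
        unfolding A_def by (intro finite_measure_mono) auto
      also have "\<dots> \<le> c * \<epsilon>" using small \<epsilon> by simp
      finally show ?thesis .
    qed
    ultimately show ?thesis by (intro LIMSEQ_le_const2) auto
  qed
  have null: "(\<Inter>j. \<Union>K. A (1 / (real j + 1)) K) \<in> null_sets M"
  proof (rule INT_in_null_sets)
    show "prob (\<Union>K. A (1 / (real j + 1)) K) \<le> c * (1 / (real j + 1))" for j by (rule A_le) simp
    show "(\<lambda>j. c * (1 / (real j + 1))) \<longlonglongrightarrow> 0" by real_asymp
  qed simp
  show ?thesis
  proof (rule AE_I'[OF null], rule subsetI)
    fix \<omega> assume "\<omega> \<in> {\<omega>\<in>space M. \<not> \<not> (\<lambda>N. Y N \<omega>) \<longlonglongrightarrow> 0}"
    then have \<omega>: "\<omega> \<in> space M" and lim: "(\<lambda>N. Y N \<omega>) \<longlonglongrightarrow> 0" by auto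
    show "\<omega> \<in> (\<Inter>j. \<Union>K. A (1 / (real j + 1)) K)"
    proof
      fix j :: nat
      have "\<forall>\<^sub>F N in sequentially. \<bar>Y N \<omega>\<bar> < 1 / (real j + 1)"
        using order_tendstoD(2)[OF tendsto_rabs[OF lim], of "1 / (real j + 1)"] by simp
      then obtain K where "\<And>N. N \<ge> K \<Longrightarrow> \<bar>Y N \<omega>\<bar> < 1 / (real j + 1)"
        unfolding eventually_sequentially by blast
      then have "\<omega> \<in> A (1 / (real j + 1)) K" unfolding A_def using \<omega> by auto
      then show "\<omega> \<in> (\<Union>K. A (1 / (real j + 1)) K)" by blast
    qed
  qed
qed

lemma fBm_exp_riemann_sums_not_tendsto_zero_AE:
  assumes P: "prob_space M" and F: "fBm M H B" and H: "1/2 \<le> H" and \<theta>: "0 < \<theta>"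
  shows "AE \<omega> in M. \<not> (\<lambda>N::nat. \<Sum>i<N*N. exp (-\<theta> * (real i / real N)) * B (real i / real N) \<omega> / real N)
    \<longlonglongrightarrow> 0"
proof -
  interpret prob_space M by fact
  have G: "centered_gaussian_process M B (fbm_cov H)" using F by (simp add: fBm_def)
  have [measurable]: "B t \<in> borel_measurable M" if "0 \<le> t" for t
    using centered_gaussian_process_measurable[OF G that] .
  define v0 where "v0 = exp (-4 * \<theta>)"
  have v0: "0 < v0" unfolding v0_def by simp
  show ?thesis
  proof (rule AE_not_LIMSEQ_zero_if_small_ball[where start=2 and c="2 / sqrt (2 * pi * v0)"])
    fix N :: nat and \<epsilon> :: real assume N: "2 \<le> N" and \<epsilon>: "0 < \<epsilon>"
    define c where "c = (\<lambda>i::nat. exp (-\<theta> * (real i / real N)) / real N)"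
    define ts where "ts = (\<lambda>i::nat. real i / real N)"
    define v where "v = (\<Sum>i<N*N. \<Sum>j<N*N. c i * c j * fbm_cov H (ts i) (ts j))"
    have v: "v0 \<le> v" unfolding v_def v0_def c_def ts_def by (rule fbm_exp_riemann_variance_ge[OF H \<theta> N])
    have "distributed M lborel (\<lambda>\<omega>. \<Sum>i<N*N. c i * B (ts i) \<omega>) (normal_density 0 (sqrt v))"
      unfolding v_def using v v0 by (intro centered_gaussian_process_distributed[OF G]) (auto simp: ts_def v_def)
    moreover have "(\<lambda>\<omega>. \<Sum>i<N*N. c i * B (ts i) \<omega>)
        = (\<lambda>\<omega>. \<Sum>i<N*N. exp (-\<theta> * (real i / real N)) * B (real i / real N) \<omega> / real N)"
      by (simp add: c_def ts_def)
    ultimately have "prob {\<omega>\<in>space M. \<bar>\<Sum>i<N*N. exp (-\<theta> * (real i / real N)) * B (real i / real N) \<omega> / real N\<bar> < \<epsilon>}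
        \<le> 2 * \<epsilon> / sqrt (2 * pi * (sqrt v)\<^sup>2)"
      using v v0 \<epsilon> by (intro normal_small_ball[OF P]) auto
    also have "\<dots> \<le> 2 / sqrt (2 * pi * v0) * \<epsilon>"
      using v v0 \<epsilon> by (simp add: divide_left_mono mult_pos_pos)
    finally show "prob {\<omega>\<in>space M. \<bar>\<Sum>i<N*N. exp (-\<theta> * (real i / real N)) * B (real i / real N) \<omega> / real N\<bar> < \<epsilon>}
        \<le> 2 / sqrt (2 * pi * v0) * \<epsilon>" .
  qed measurable
qed

lemma fBm_exp_integral_nonzero_AE:
  assumes P: "prob_space M" and F: "fBm M H B" and H: "1/2 \<le> H" and \<theta>: "0 < \<theta>"
    and cont: "\<forall>\<omega>. continuous_on {0..} (\<lambda>t. B t \<omega>)"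
  shows "AE \<omega> in M. \<exists>Z. Z \<noteq> 0 \<and> ((\<lambda>T. integral {0..T} (\<lambda>s. exp (-\<theta> * s) * B s \<omega>)) \<longlongrightarrow> Z) at_top"
proof -
  have "H < 1" using F by (simp add: fBm_def)
  define \<gamma> where "\<gamma> = H / 2"
  have \<gamma>: "0 < \<gamma>" "\<gamma> < H" "\<gamma> \<le> 1" using H \<open>H < 1\<close> unfolding \<gamma>_def by auto
  have "AE \<omega> in M. B 0 \<omega> = 0" using F by (simp add: fBm_def)
  with fBm_holder_on_unit_intervals_AE[OF P F cont \<gamma>(1,2)] fBm_exp_riemann_sums_not_tendsto_zero_AE[OF P F H \<theta>]
  show ?thesis
  proof eventually_elim
    case (elim \<omega>)
    then obtain K where K: "0 \<le> K" and holder: "holder_on_unit_intervals K \<gamma> (\<lambda>t. B t \<omega>)" by blast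
    define g where "g = (\<lambda>s. exp (-\<theta> * s) * B s \<omega>)"
    have cont_g: "continuous_on {0..} g" unfolding g_def by (intro continuous_intros cont[rule_format])
    obtain c where "\<And>t. 0 \<le> t \<Longrightarrow> \<bar>g t\<bar> \<le> c * exp (- (\<theta>/2) * t)"
      using holder_on_unit_intervals_exp_weighted_bound[OF holder K \<gamma>(1) \<theta>] elim unfolding g_def by metis
    then obtain Z where Z: "((\<lambda>T. integral {0..T} g) \<longlongrightarrow> Z) at_top"
      using integral_exp_dominated_convergent[OF _ cont_g, of "\<theta>/2" c] \<theta> by auto
    obtain L where L: "0 \<le> L" and modulus: "\<And>u s. 0 \<le> u \<Longrightarrow> u \<le> s \<Longrightarrow> s \<le> u + 1 \<Longrightarrow>
        \<bar>g s - g u\<bar> \<le> L * exp (- (\<theta>/2) * s) * (s - u) powr \<gamma>"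
      using exp_weighted_modulus[OF holder K \<gamma>(1,3) \<theta>] unfolding g_def by metis
    have "(\<lambda>N::nat. \<Sum>i<N*N. g (real i / real N) / real N) \<longlonglongrightarrow> Z"
      by (rule riemann_sums_tendsto_improper_integral[OF cont_g _ \<gamma>(1) L modulus Z]) (use \<theta> in simp)
    then have "Z \<noteq> 0" using elim unfolding g_def by auto
    with Z show ?case unfolding g_def by blast
  qed
qed

theorem mainTheorem1:
  fixes M :: "'a measure" and B X :: "real \<Rightarrow> 'a \<Rightarrow> real" and H \<theta> :: real
  assumes "prob_space M"
    and "1/2 < H" and "H < 1" and "\<theta> > 0"
    and "fBm M H B"
    and "\<forall>\<omega>. continuous_on {0..} (\<lambda>t. B t \<omega>)"
    and "\<forall>\<omega>. continuous_on {0..} (\<lambda>t. X t \<omega>)"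
    and "\<forall>\<omega> t. 0 \<le> t \<longrightarrow> X t \<omega> = \<theta> * integral {0..t} (\<lambda>s. X s \<omega>) + B t \<omega>"
  shows "AE \<omega> in M.
    ((\<lambda>t. RS_integral (\<lambda>s. X s \<omega>) (\<lambda>s. X s \<omega>) 0 t / integral {0..t} (\<lambda>s. (X s \<omega>)\<^sup>2))
       \<longlongrightarrow> \<theta>) at_top"
proof -
  note P = assms(1) and F = assms(5) and cont_B = assms(6) and cont_X = assms(7) and ode = assms(8)
  define \<gamma> where "\<gamma> = (2 * H + 1) / 4"
  have \<gamma>: "1/2 < \<gamma>" "\<gamma> < H" "0 < \<gamma>" "\<gamma> \<le> 1" using assms(2,3) unfolding \<gamma>_def by auto
  have "AE \<omega> in M. B 0 \<omega> = 0" using F by (simp add: fBm_def)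
  with fBm_holder_on_unit_intervals_AE[OF P F cont_B \<gamma>(3,2)]
    fBm_exp_integral_nonzero_AE[OF P F less_imp_le[OF assms(2)] assms(4) cont_B]
  show ?thesis
  proof eventually_elim
    case (elim \<omega>)
    then obtain K Z where K: "0 \<le> K" "holder_on_unit_intervals K \<gamma> (\<lambda>t. B t \<omega>)"
      and Z: "((\<lambda>T. integral {0..T} (\<lambda>s. exp (-\<theta> * s) * B s \<omega>)) \<longlongrightarrow> Z) at_top" "Z \<noteq> 0"
      by blast
    have "\<And>t. 0 \<le> t \<Longrightarrow> X t \<omega> = \<theta> * integral {0..t} (\<lambda>s. X s \<omega>) + B t \<omega>" using ode by blast
    from least_squares_ratio_tendsto[OF assms(4) cont_X[rule_format] this _ K(2,1) \<gamma>(1,4) Z] elim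
    show ?case by simp
  qed
qed

end
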